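(* Suppose $\operatorname{char}\mathcal{F}=0$ (so $\mathcal{F}$ is a finite extension of $\mathbb{Q}_p$), fix $\alpha\in\mathcal{F}\setminus\{0\}$, a positive integer $K$, $z\in\mathcal{F}$ with $|z|_\mathfrak{p}>1$, and $\delta>0$. Let $(r_n)$ be a strictly increasing sequence of positive integers with $\lim_{n\to\infty}(r_{n+1}-r_n)=\infty$ and $p^K\nmid r_n$ for all $n$. Then for any sequence $(b_n)$ in $\mathcal{O}$, the set $$E(r_n,b_n)=\{x\in D(z,\delta):|x|_\mathfrak{p}>1,\ \lim_{n\to\infty}([\alpha x^{r_n}]-b_n)=0\}$$ has $\dim_{\mathcal H}E(r_n,b_n)=1$.
   Context: $\mathcal{F}$ has valuation ring $\mathcal{O}$, normalized absolute value $|\cdot|_\mathfrak{p}$, prime element $\pi$; $[x]=\sum_{n\ge0}c_n\pi^n$ for $x=\sum_{n\ge v}c_n\pi^n$ with digits in a fixed representative set $C\ni0$ of $\mathcal{O}/\mathfrak{p}$. $D(z,\delta)=\{x:|x-z|_\mathfrak{p}\le\delta\}$. Limits are with respect to $|\cdot|_\mathfrak{p}$; Hausdorff dimension is with respect to $|x-y|_\mathfrak{p}$. *)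

theory Defs
  imports "HOL-Analysis.Analysis"
begin

text \<open>A non-archimedean local field of characteristic 0 is modelled as a type
  'a of class field_char_0 together with a normalized absolute value v,
  a prime element prm and a fixed set C of representatives (containing 0)
  of the residue field O/p.\<close>

definition local_field :: "('a::field_char_0 \<Rightarrow> real) \<Rightarrow> 'a \<Rightarrow> 'a set \<Rightarrow> bool" where
  "local_field v prm C \<longleftrightarrow>
     v 0 = 0 \<and> (\<forall>x. x \<noteq> 0 \<longrightarrow> v x > 0) \<and>
     (\<forall>x y. v (x * y) = v x * v y) \<and>
     (\<forall>x y. v (x + y) \<le> max (v x) (v y)) \<and>
     0 < v prm \<and> v prm < 1 \<and>
     (\<forall>x. x \<noteq> 0 \<longrightarrow> (\<exists>k::int. v x = v prm powi k)) \<and>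
     finite C \<and> 0 \<in> C \<and> (\<forall>c\<in>C. v c \<le> 1) \<and>
     (\<forall>x. v x \<le> 1 \<longrightarrow> (\<exists>!c. c \<in> C \<and> v (x - c) < 1)) \<and>
     v prm = 1 / real (card C) \<and>
     (\<forall>f::nat \<Rightarrow> 'a. (\<forall>e>0. \<exists>N. \<forall>m\<ge>N. \<forall>n\<ge>N. v (f m - f n) < e)
          \<longrightarrow> (\<exists>L. (\<lambda>n. v (f n - L)) \<longlonglongrightarrow> 0))"

definition p_tendsto :: "('a::field_char_0 \<Rightarrow> real) \<Rightarrow> (nat \<Rightarrow> 'a) \<Rightarrow> 'a \<Rightarrow> bool" where
  "p_tendsto v f L \<longleftrightarrow> (\<lambda>n. v (f n - L)) \<longlonglongrightarrow> 0"

definition digit_exp :: "('a::field_char_0 \<Rightarrow> real) \<Rightarrow> 'a \<Rightarrow> 'a set \<Rightarrow> 'a \<Rightarrow> (int \<Rightarrow> 'a) \<Rightarrow> bool" where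
  "digit_exp v prm C x c \<longleftrightarrow> (\<forall>n. c n \<in> C) \<and> (\<exists>N. \<forall>n<N. c n = 0) \<and>
     p_tendsto v (\<lambda>m. \<Sum>n\<in>{- int m..int m}. c n * prm powi n) x"

definition int_part :: "('a::field_char_0 \<Rightarrow> real) \<Rightarrow> 'a \<Rightarrow> 'a set \<Rightarrow> 'a \<Rightarrow> 'a" where
  "int_part v prm C x = (THE y. \<exists>c. digit_exp v prm C x c \<and>
       p_tendsto v (\<lambda>m. \<Sum>n\<in>{0..int m}. c n * prm powi n) y)"

definition p_diam :: "('a::field_char_0 \<Rightarrow> real) \<Rightarrow> 'a set \<Rightarrow> ennreal" where
  "p_diam v S = (SUP x\<in>S. SUP y\<in>S. ennreal (v (x - y)))"

definition hcontent :: "('a::field_char_0 \<Rightarrow> real) \<Rightarrow> real \<Rightarrow> real \<Rightarrow> 'a set \<Rightarrow> ennreal" where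
  "hcontent v s d E = (INF U\<in>{U :: nat \<Rightarrow> 'a set. E \<subseteq> (\<Union>i. U i) \<and> (\<forall>i. p_diam v (U i) \<le> ennreal d)}.
      (\<Sum>i. if U i = {} then 0 else if s = 0 then 1
            else ennreal (enn2real (p_diam v (U i)) powr s)))"

definition hmeasure :: "('a::field_char_0 \<Rightarrow> real) \<Rightarrow> real \<Rightarrow> 'a set \<Rightarrow> ennreal" where
  "hmeasure v s E = (SUP d\<in>{d. d > 0}. hcontent v s d E)"

definition hdim :: "('a::field_char_0 \<Rightarrow> real) \<Rightarrow> 'a set \<Rightarrow> ereal" where
  "hdim v E = Inf (ereal ` {s. 0 \<le> s \<and> hmeasure v s E = 0})"

end

theory Submission
  imports Defs "HOL-Probability.Probability"
begin

text \<open>A disc of radius rho ^ (- M) is covered by card C ^ (P + M) discs of radius rho ^ P,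
  and card C * rho = 1; this gives the upper bound 1. For the lower bound, every sequence w of digits
  is turned into a point of the set by an iteration in which blocks of free digits, copied
  from w, alternate with Newton corrections that make [alpha x ^ r n] equal to b n. Since p ^ K
  does not divide r n, the absolute value of r n is bounded below, so each correction only
  affects digits from position about m * r n on, where v z = rho ^ (- m); and since
  r (Suc n) - r n tends to infinity, the free blocks can be made to fill a proportion of the
  positions arbitrarily close to 1. Pushing the uniform measure on digit sequences forward
  gives a mass distribution on the set, so its s-dimensional Hausdorff measure is positive for
  every s < 1.\<close>

lemma sum_int_interval_reindex:
  fixes g :: "int \<Rightarrow> 'b::comm_monoid_add"
  shows "(\<Sum>n\<in>{a..b}. g n) = (\<Sum>j<nat (b - a + 1). g (a + int j))"
  by (rule sum.reindex_bij_witness[where j="\<lambda>n. nat (n - a)" and i="\<lambda>j. a + int j"]) auto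

lemma powr_power_swap: fixes x :: real assumes "0 < x" shows "(x ^ n) powr s = (x powr s) ^ n"
  using assms by (simp add: powr_realpow[symmetric] powr_powr powr_power mult.commute)

section \<open>Hausdorff dimension\<close>

lemma hmeasure_empty: "hmeasure v s {} = 0"
proof -
  have "hcontent v s d {} \<le> 0" for d :: real
  proof -
    have "p_diam v {} = 0" by (simp add: p_diam_def bot_ennreal)
    then have "hcontent v s d {} \<le> (\<Sum>i::nat. if ({} :: 'a set) = {} then 0 else if s = 0 then 1
            else ennreal (enn2real (p_diam v ({} :: 'a set)) powr s))"
      unfolding hcontent_def by (intro INF_lower) auto
    then show ?thesis by simp
  qed
  then show ?thesis by (simp add: hmeasure_def SUP_constant bot_ennreal)
qed

lemma hmeasure_zero_pos:
  assumes "E \<noteq> {}"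
  shows "0 < hmeasure v 0 E"
proof -
  obtain x0 where x0: "x0 \<in> E" using assms by blast
  have "1 \<le> hcontent v 0 1 E"
    unfolding hcontent_def
  proof (rule INF_greatest)
    fix U :: "nat \<Rightarrow> 'a set" assume "U \<in> {U. E \<subseteq> (\<Union>i. U i) \<and> (\<forall>i. p_diam v (U i) \<le> ennreal 1)}"
    then obtain i where i: "x0 \<in> U i" using x0 by blast
    define t where "t j = (if U j = {} then 0 else if (0::real) = 0 then 1
            else ennreal (enn2real (p_diam v (U j)) powr 0))" for j :: nat
    have "1 = (\<Sum>j\<in>{i}. t j)" using i by (auto simp: t_def)
    also have "\<dots> \<le> (\<Sum>j. t j)" by (rule sum_le_suminf) auto
    finally show "1 \<le> (\<Sum>j. if U j = {} then 0 else if (0::real) = 0 then 1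
            else ennreal (enn2real (p_diam v (U j)) powr 0))" unfolding t_def .
  qed
  also have "\<dots> \<le> hmeasure v 0 E" unfolding hmeasure_def by (rule SUP_upper) simp
  finally show ?thesis by (simp add: less_le_trans[OF zero_less_one])
qed

lemma hdim_eq_1I:
  assumes upper: "\<And>s. 1 < s \<Longrightarrow> hmeasure v s E = 0"
    and lower: "\<And>s. 0 < s \<Longrightarrow> s < 1 \<Longrightarrow> 0 < hmeasure v s E"
  shows "hdim v E = 1"
proof -
  have "E \<noteq> {}" using lower[of "1/2"] hmeasure_empty[of v "1/2"] by auto
  define S where "S = {s. 0 \<le> s \<and> hmeasure v s E = 0}"
  have S_ge_1: "1 \<le> s" if "s \<in> S" for s
  proof (rule ccontr)
    assume "\<not> 1 \<le> s"
    moreover have "0 \<le> s" "hmeasure v s E = 0" using that by (auto simp: S_def)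
    moreover have "0 < hmeasure v 0 E" using \<open>E \<noteq> {}\<close> by (rule hmeasure_zero_pos)
    ultimately show False using lower[of s] by (cases "s = 0") auto
  qed
  have "Inf (ereal ` S) \<le> 1"
  proof (rule ereal_le_epsilon2)
    fix e :: real assume "0 < e"
    then have "1 + e \<in> S" using upper[of "1 + e"] by (simp add: S_def)
    then have "Inf (ereal ` S) \<le> ereal (1 + e)" by (intro Inf_lower) auto
    then show "Inf (ereal ` S) \<le> 1 + ereal e" by (simp add: add.commute)
  qed
  moreover have "1 \<le> Inf (ereal ` S)" using S_ge_1 by (intro Inf_greatest) auto
  ultimately show ?thesis by (simp add: hdim_def S_def)
qed

section \<open>Blocks of free digit positions\<close>

locale block_sequence =
  fixes A B :: "nat \<Rightarrow> nat" and R :: nat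
  assumes A_le_B: "A k \<le> B k" and B_le_A_Suc: "B k \<le> A (Suc k)"
    and gap_le_block: "k \<ge> 1 \<Longrightarrow> R * (A (Suc k) - B k) \<le> B k - A k"
    and B_unbounded: "k \<le> B k"
begin

definition free :: "nat \<Rightarrow> bool" where
  "free j \<longleftrightarrow> (\<exists>k. A k \<le> j \<and> j < B k)"

definition free_count :: "nat \<Rightarrow> nat \<Rightarrow> nat" where
  "free_count a b = card {j. a \<le> j \<and> j < b \<and> free j}"

definition K0 :: nat where
  "K0 = A 0 + (A 1 - B 0)"

lemma A_mono: "k \<le> k' \<Longrightarrow> A k \<le> A k'"
proof (induction k' rule: dec_induct)
  case (step k')
  then show ?case using A_le_B[of k'] B_le_A_Suc[of k'] by linarith
qed simp

lemma B_mono: "k \<le> k' \<Longrightarrow> B k \<le> B k'"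
proof (induction k' rule: dec_induct)
  case (step k')
  then show ?case using A_le_B[of "Suc k'"] B_le_A_Suc[of k'] by linarith
qed simp

lemma free_count_split: "a \<le> b \<Longrightarrow> b \<le> c \<Longrightarrow> free_count a c = free_count a b + free_count b c"
  unfolding free_count_def
  by (subst card_Un_disjoint[symmetric])
    (auto intro: finite_subset[of _ "{..<c}"] arg_cong[where f = card])

lemma free_count_block: assumes "A k \<le> a" "a \<le> b" "b \<le> B k" shows "free_count a b = b - a"
proof -
  have "{j. a \<le> j \<and> j < b \<and> free j} = {a..<b}"
  proof (intro set_eqI iffI)
    fix j assume "j \<in> {a..<b}"
    then have "A k \<le> j \<and> j < B k" using assms by auto
    then show "j \<in> {j. a \<le> j \<and> j < b \<and> free j}" using \<open>j \<in> {a..<b}\<close> unfolding free_def by auto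
  qed auto
  then show ?thesis by (simp add: free_count_def)
qed

lemma not_free_gap: assumes "B k \<le> j" "j < A (Suc k)" shows "\<not> free j"
proof
  assume "free j"
  then obtain k' where k': "A k' \<le> j" "j < B k'" by (auto simp: free_def)
  show False
  proof (cases "k' \<le> k")
    case True
    then show False using B_mono[OF True] k' assms by linarith
  next
    case False
    then show False using A_mono[of "Suc k" k'] k' assms by linarith
  qed
qed

lemma free_count_gap: assumes "B k \<le> a" "b \<le> A (Suc k)" shows "free_count a b = 0"
  using not_free_gap[of k] assms by (fastforce simp: free_count_def)

lemma free_count_initial_gap: assumes "b \<le> A 0" shows "free_count 0 b = 0"
proof -
  have "\<not> free j" if "j < A 0" for j
    using that A_mono[of 0] unfolding free_def by (metis le0 le_trans not_le)
  then have "{j. 0 \<le> j \<and> j < b \<and> free j} = {}" using assms by auto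
  then show ?thesis by (simp add: free_count_def)
qed

lemma le_free_count_add_K0: assumes "P \<le> A 1" shows "P \<le> free_count 0 P + K0"
proof -
  consider "P \<le> A 0" | "A 0 < P" "P \<le> B 0" | "B 0 < P"
    by linarith
  then show ?thesis
  proof cases
    case 2
    then have "free_count 0 P = free_count 0 (A 0) + free_count (A 0) P"
      by (intro free_count_split) auto
    then show ?thesis using 2 free_count_initial_gap free_count_block[of 0 "A 0" P]
      by (simp add: K0_def)
  next
    case 3
    then have "free_count 0 P = free_count 0 (A 0) + free_count (A 0) (B 0) + free_count (B 0) P"
      using A_le_B[of 0] free_count_split by (metis le0 less_imp_le)
    then show ?thesis using 3 assms A_le_B[of 0] free_count_initial_gap
        free_count_block[of 0 "A 0" "B 0"] free_count_gap[of 0 "B 0" P] by (simp add: K0_def)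
  qed (simp add: K0_def)
qed

lemma free_count_block_start: "k \<ge> 1 \<Longrightarrow> R * A k \<le> (R + 1) * free_count 0 (A k) + R * K0"
proof (induction k rule: dec_induct)
  case base
  have "R * A 1 \<le> R * (free_count 0 (A 1) + K0)"
    using le_free_count_add_K0[of "A 1"] by simp
  then show ?case by (simp add: algebra_simps)
next
  case (step k)
  define f where "f = B k - A k"
  have A_Suc: "A (Suc k) = A k + f + (A (Suc k) - B k)"
    using A_le_B[of k] B_le_A_Suc[of k] by (simp add: f_def)
  have "free_count 0 (A (Suc k)) =
      free_count 0 (A k) + free_count (A k) (B k) + free_count (B k) (A (Suc k))"
    using A_le_B[of k] B_le_A_Suc[of k] free_count_split by (metis le0)
  then have N: "free_count 0 (A (Suc k)) = free_count 0 (A k) + f"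
    using free_count_block[of k "A k" "B k"] free_count_gap[of k "B k" "A (Suc k)"] A_le_B[of k]
    by (simp add: f_def)
  have "R * (A (Suc k) - B k) \<le> f" using gap_le_block[OF step(1)] by (simp add: f_def)
  then have "R * A (Suc k) \<le> R * A k + R * f + f"
    by (subst A_Suc) (simp add: algebra_simps)
  then show ?case using step.IH N by (simp add: algebra_simps)
qed

lemma block_index_exists: assumes "A 0 \<le> P" shows "\<exists>k. A k \<le> P \<and> P < A (Suc k)"
proof -
  have ex: "\<exists>k. P < A k"
    using B_unbounded[of "Suc P"] B_le_A_Suc[of "Suc P"] by (intro exI[of _ "Suc (Suc P)"]) linarith
  define k where "k = (LEAST k. P < A k)"
  have "P < A k" unfolding k_def by (rule LeastI_ex[OF ex])
  moreover have "k \<noteq> 0" using \<open>P < A k\<close> assms by (intro notI) simp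
  then obtain k' where "k = Suc k'" using not0_implies_Suc by blast
  moreover have "A k' \<le> P" using not_less_Least[of k' "\<lambda>k. P < A k"] \<open>k = Suc k'\<close> k_def by fastforce
  ultimately show ?thesis by blast
qed

lemma free_count_lower_bound: "R * P \<le> (R + 1) * free_count 0 P + R * K0"
proof (cases "P \<le> A 1")
  case True
  then have "R * P \<le> R * (free_count 0 P + K0)" using le_free_count_add_K0 by simp
  then show ?thesis by (simp add: algebra_simps)
next
  case False
  then have "A 0 \<le> P" using A_mono[of 0 1] by simp
  then obtain k where k: "A k \<le> P" "P < A (Suc k)" using block_index_exists by blast
  have "k \<ge> 1" using k(2) False A_mono[of "Suc k" 1] by (cases k) auto
  note IH = free_count_block_start[OF \<open>k \<ge> 1\<close>]
  show ?thesis
  proof (cases "P \<le> B k")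
    case True
    have "free_count 0 P = free_count 0 (A k) + free_count (A k) P"
      using k(1) by (intro free_count_split) auto
    then have "free_count 0 P = free_count 0 (A k) + (P - A k)"
      using free_count_block[of k "A k" P] k True by simp
    then show ?thesis using IH k by (simp add: algebra_simps)
  next
    case False
    define f where "f = B k - A k"
    have "free_count 0 P = free_count 0 (A k) + free_count (A k) (B k) + free_count (B k) P"
      using A_le_B[of k] False free_count_split by (metis le0 nat_le_linear)
    then have N: "free_count 0 P = free_count 0 (A k) + f"
      using free_count_block[of k "A k" "B k"] free_count_gap[of k "B k" P] False k A_le_B[of k]
      by (simp add: f_def)
    have "R * (P - B k) \<le> R * (A (Suc k) - B k)" using k by (intro mult_le_mono2) simp
    then have "R * (P - B k) \<le> f"
      unfolding f_def using gap_le_block[OF \<open>k \<ge> 1\<close>] by (rule order_trans)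
    moreover have "P = A k + f + (P - B k)" using A_le_B[of k] False k by (simp add: f_def)
    ultimately have "R * P \<le> R * A k + R * f + f"
      by (metis add_le_mono1 distrib_left nat_add_left_cancel_le)
    then show ?thesis using IH N by (simp add: algebra_simps)
  qed
qed

end

lemma filterlim_gaps_nat:
  fixes r :: "nat \<Rightarrow> nat"
  assumes "strict_mono r" "filterlim (\<lambda>n. real (r (Suc n)) - real (r n)) at_top sequentially"
  shows "filterlim (\<lambda>n. r (Suc n) - r n) at_top sequentially"
  using assms
    by (simp add: filterlim_sequentially_iff_filterlim_real of_nat_diff strict_mono_less_eq)

lemma exists_block_lengths:
  fixes d :: "nat \<Rightarrow> nat" and R g :: nat
  assumes d: "filterlim d at_top sequentially"
  obtains l where "filterlim l at_top sequentially"
    and "\<forall>\<^sub>F n in sequentially. R * (l n + g) + g + l (n - 1) \<le> d (n - 1)"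
proof
  define T where "T = 2 * (R + 1)"
  define l where "l n = min (d n) (d (n - 1)) div T" for n
  have "T > 0" by (simp add: T_def)
  have d_ge: "\<exists>N. \<forall>n\<ge>N. B \<le> d (n - 1) \<and> B \<le> d n" for B
  proof -
    obtain N where "\<forall>n\<ge>N. B \<le> d n" using d by (auto simp: filterlim_at_top eventually_sequentially)
    then show ?thesis by (intro exI[of _ "Suc N"]) auto
  qed
  show "filterlim l at_top sequentially"
    unfolding filterlim_at_top eventually_sequentially
  proof
    fix B
    obtain N where N: "\<forall>n\<ge>N. T * B \<le> d (n - 1) \<and> T * B \<le> d n" using d_ge by blast
    have "B \<le> l n" if "n \<ge> N" for n
    proof -
      have "T * B div T \<le> min (d n) (d (n - 1)) div T" using that N by (intro div_le_mono) auto
      moreover have "T * B div T = B" using \<open>T > 0\<close> by simp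
      ultimately show ?thesis by (simp add: l_def)
    qed
    then show "\<exists>N. \<forall>n\<ge>N. B \<le> l n" by blast
  qed
  obtain N where N: "\<forall>n\<ge>N. T * g \<le> d (n - 1) \<and> T * g \<le> d n" using d_ge by blast
  have "R * (l n + g) + g + l (n - 1) \<le> d (n - 1)" if "n \<ge> N" for n
  proof -
    define w where "w = d (n - 1) div T"
    have "l n \<le> w" "l (n - 1) \<le> w" by (auto simp: l_def w_def div_le_mono)
    then have "R * l n + l (n - 1) \<le> R * w + w" by (intro add_mono mult_le_mono2)
    then have "R * (l n + g) + g + l (n - 1) \<le> (R + 1) * w + (R + 1) * g"
      by (simp add: algebra_simps)
    moreover have "2 * ((R + 1) * w) \<le> d (n - 1)"
      using div_times_less_eq_dividend[of "d (n - 1)" T] by (simp add: w_def T_def algebra_simps)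
    moreover have "2 * ((R + 1) * g) \<le> d (n - 1)" using N that by (simp add: T_def algebra_simps)
    ultimately show ?thesis by linarith
  qed
  then show "\<forall>\<^sub>F n in sequentially. R * (l n + g) + g + l (n - 1) \<le> d (n - 1)"
    by (auto simp: eventually_sequentially)
qed

section \<open>Discretely valued fields\<close>

locale local_field_struct =
  fixes v :: "'a::field_char_0 \<Rightarrow> real" and prm :: 'a and C :: "'a set"
  assumes local_field: "local_field v prm C"
begin

abbreviation rho :: real where "rho \<equiv> v prm"

lemma v_zero [simp]: "v 0 = 0"
  using local_field unfolding local_field_def by (elim conjE)

lemma v_pos: "x \<noteq> 0 \<Longrightarrow> 0 < v x"
  using local_field unfolding local_field_def by (elim conjE) simp

lemma v_mult: "v (x * y) = v x * v y"
  using local_field unfolding local_field_def by (elim conjE) simp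

lemma v_ultrametric: "v (x + y) \<le> max (v x) (v y)"
  using local_field unfolding local_field_def by (elim conjE) simp

lemma rho_gt_0: "0 < rho"
  using local_field unfolding local_field_def by (elim conjE)

lemma rho_less_1: "rho < 1"
  using local_field unfolding local_field_def by (elim conjE)

lemma v_discrete: "x \<noteq> 0 \<Longrightarrow> \<exists>k::int. v x = rho powi k"
  using local_field unfolding local_field_def by (elim conjE) simp

lemma finite_C: "finite C"
  using local_field unfolding local_field_def by (elim conjE)

lemma zero_in_C: "0 \<in> C"
  using local_field unfolding local_field_def by (elim conjE)

lemma v_C_le_1: "c \<in> C \<Longrightarrow> v c \<le> 1"
  using local_field unfolding local_field_def by (elim conjE) simp

lemma residue_rep_unique: "v x \<le> 1 \<Longrightarrow> \<exists>!c. c \<in> C \<and> v (x - c) < 1"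
  using local_field unfolding local_field_def by (elim conjE) simp

lemma rho_eq: "rho = 1 / real (card C)"
  using local_field unfolding local_field_def by (elim conjE)

lemma p_Cauchy_converges:
  assumes "\<And>e. e > 0 \<Longrightarrow> \<exists>N. \<forall>m\<ge>N. \<forall>n\<ge>N. v (f m - f n) < e"
  shows "\<exists>L. p_tendsto v f L"
proof -
  have "\<forall>f::nat \<Rightarrow> 'a. (\<forall>e>0. \<exists>N. \<forall>m\<ge>N. \<forall>n\<ge>N. v (f m - f n) < e)
          \<longrightarrow> (\<exists>L. (\<lambda>n. v (f n - L)) \<longlonglongrightarrow> 0)"
    using local_field unfolding local_field_def by (elim conjE)
  then show ?thesis using assms unfolding p_tendsto_def by blast
qed

lemma v_nonneg [simp]: "0 \<le> v x"
  by (cases "x = 0") (auto dest: v_pos)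

lemma v_eq_0_iff [simp]: "v x = 0 \<longleftrightarrow> x = 0"
  using v_pos by fastforce

lemma v_one [simp]: "v 1 = 1"
  using v_mult[of 1 1] v_pos[of 1] by simp

lemma v_minus [simp]: "v (- x) = v x"
proof -
  have "(v (-1) - 1) * (v (-1) + 1) = 0"
    using v_mult[of "-1" "-1"] by (simp add: algebra_simps)
  moreover have "v (-1) + 1 > 0" using v_nonneg[of "-1"] by linarith
  ultimately have "v (-1) = 1" by simp
  then show ?thesis using v_mult[of "-1" x] by simp
qed

lemma v_commute: "v (x - y) = v (y - x)"
  by (metis minus_diff_eq v_minus)

lemma v_power: "v (x ^ n) = v x ^ n"
  by (induction n) (auto simp: v_mult)

lemma v_inverse: "v (inverse x) = inverse (v x)"
proof (cases "x = 0")
  case False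
  then have "v x * v (inverse x) = 1" using v_mult[of x "inverse x"] by simp
  then show ?thesis using False by (simp add: field_simps)
qed simp

lemma v_divide: "v (x / y) = v x / v y"
  by (simp add: divide_inverse v_mult v_inverse)

lemma v_power_int: "v (x powi k) = v x powi k"
  by (cases "k \<ge> 0") (auto simp: power_int_def v_power v_inverse)

lemma v_add_le: "v x \<le> B \<Longrightarrow> v y \<le> B \<Longrightarrow> v (x + y) \<le> B"
  using v_ultrametric[of x y] by simp

lemma v_diff_le: "v x \<le> B \<Longrightarrow> v y \<le> B \<Longrightarrow> v (x - y) \<le> B"
  using v_add_le[of x B "- y"] by simp

lemma v_triangle: "v (x - z) \<le> max (v (x - y)) (v (y - z))"
  using v_ultrametric[of "x - y" "y - z"] by simp

lemma v_add_eq_left: assumes "v y < v x" shows "v (x + y) = v x"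
proof -
  have "v (x + y) \<le> v x" using v_ultrametric[of x y] assms by simp
  moreover have "v x \<le> max (v (x + y)) (v y)" using v_ultrametric[of "x + y" "- y"] by simp
  ultimately show ?thesis using assms by linarith
qed

lemma v_sum_le:
  assumes "\<And>i. i \<in> S \<Longrightarrow> v (f i) \<le> B" "0 \<le> B"
  shows "v (sum f S) \<le> B"
proof (cases "finite S")
  case True
  then show ?thesis using assms by (induction S rule: finite_induct) (auto intro!: v_add_le)
qed (use assms in simp)

lemma v_of_nat_le_1: "v (of_nat n) \<le> 1"
  by (induction n) (auto intro: v_add_le)

lemma v_of_int_le_1: "v (of_int k) \<le> 1"
proof (cases "k \<ge> 0")
  case True
  then show ?thesis using v_of_nat_le_1[of "nat k"] by simp
next
  case False
  then have "of_int k = - (of_nat (nat (- k)) :: 'a)" by simp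
  then show ?thesis using v_of_nat_le_1[of "nat (- k)"] by simp
qed

lemma prm_nonzero: "prm \<noteq> 0"
  using rho_gt_0 by auto

lemma v_prm_power: "v (prm ^ n) = rho ^ n"
  by (simp add: v_power)

lemma rho_power_antimono: "i \<le> j \<Longrightarrow> rho ^ j \<le> rho ^ i"
  using rho_gt_0 rho_less_1 by (intro power_decreasing) auto

lemma rho_power_le_1: "rho ^ n \<le> 1"
  using rho_power_antimono[of 0 n] by simp

lemma v_less_1_imp_le_rho: assumes "v x < 1" shows "v x \<le> rho"
proof (cases "x = 0")
  case False
  then obtain k where k: "v x = rho powi k" using v_discrete by blast
  have "k \<ge> 1"
  proof (rule ccontr)
    assume "\<not> k \<ge> 1"
    then have "rho powi k = inverse rho ^ nat (- k)" by (simp add: power_int_def power_inverse)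
    moreover have "inverse rho \<ge> 1" using rho_gt_0 rho_less_1 by (simp add: one_le_inverse_iff)
    ultimately have "rho powi k \<ge> 1" by (simp add: one_le_power)
    then show False using k assms by simp
  qed
  then have "rho powi k \<le> rho powi 1"
    using rho_gt_0 rho_less_1 by (intro power_int_decreasing) auto
  then show ?thesis using k by simp
qed (use rho_gt_0 in simp)

lemma v_greater_1_eq_power: assumes "v x > 1" shows "\<exists>m::nat. m \<ge> 1 \<and> v x = inverse rho ^ m"
proof -
  have "x \<noteq> 0" using assms by auto
  then obtain k where k: "v x = rho powi k" using v_discrete by blast
  have "k < 0"
  proof (rule ccontr)
    assume "\<not> k < 0"
    then have "rho powi k \<le> 1" using rho_gt_0 rho_less_1 by (simp add: power_int_def power_le_one)
    then show False using k assms by simp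
  qed
  then have "v x = inverse rho ^ nat (- k)" using k by (simp add: power_int_def power_inverse)
  then show ?thesis using \<open>k < 0\<close> by (intro exI[of _ "nat (- k)"]) auto
qed

lemma v_C_diff: assumes "c \<in> C" "c' \<in> C" "c \<noteq> c'" shows "v (c - c') = 1"
proof -
  have "v (c - c') \<le> 1" using assms v_C_le_1 by (intro v_diff_le)
  moreover have "\<not> v (c - c') < 1"
  proof
    assume "v (c - c') < 1"
    moreover have "v (c - c) < 1" by simp
    ultimately show False using residue_rep_unique[of c] v_C_le_1[OF assms(1)] assms by blast
  qed
  ultimately show ?thesis by simp
qed

lemma card_C_gt_1: "real (card C) > 1"
proof (rule ccontr)
  assume "\<not> real (card C) > 1"
  then have "real (card C) * rho \<le> rho" using rho_gt_0 by (simp add: mult_le_cancel_right1)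
  moreover have "card C > 0" using finite_C zero_in_C by (auto simp: card_gt_0_iff)
  ultimately show False using rho_eq rho_less_1 by simp
qed

definition residue :: "'a \<Rightarrow> 'a" where
  "residue x = (SOME c. c \<in> C \<and> v (x - c) < 1)"

definition digit_shift :: "'a \<Rightarrow> 'a" where
  "digit_shift x = (x - residue x) / prm"

definition digit :: "'a \<Rightarrow> nat \<Rightarrow> 'a" where
  "digit x j = residue ((digit_shift ^^ j) x)"

lemma residue: assumes "v x \<le> 1" shows "residue x \<in> C" "v (x - residue x) \<le> rho"
proof -
  have "residue x \<in> C \<and> v (x - residue x) < 1"
    unfolding residue_def using residue_rep_unique[OF assms] by (rule someI_ex[OF ex1_implies_ex])
  then show "residue x \<in> C" "v (x - residue x) \<le> rho" using v_less_1_imp_le_rho by auto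
qed

lemma v_digit_shift_le_1: "v x \<le> 1 \<Longrightarrow> v (digit_shift x) \<le> 1"
  using residue(2)[of x] rho_gt_0 by (simp add: digit_shift_def v_divide)

lemma v_digit_shift_power_le_1: "v x \<le> 1 \<Longrightarrow> v ((digit_shift ^^ n) x) \<le> 1"
  by (induction n) (auto intro: v_digit_shift_le_1)

lemma digit_in_C: "v x \<le> 1 \<Longrightarrow> digit x j \<in> C"
  unfolding digit_def by (intro residue v_digit_shift_power_le_1)

lemma sub_digit_sum_eq:
  "x - (\<Sum>j<n. digit x j * prm ^ j) = prm ^ n * (digit_shift ^^ n) x"
proof (induction n)
  case (Suc n)
  have "x - (\<Sum>j<Suc n. digit x j * prm ^ j) = prm ^ n * (digit_shift ^^ n) x - digit x n * prm ^ n"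
    using Suc by (simp add: algebra_simps)
  also have "\<dots> = prm ^ Suc n * digit_shift ((digit_shift ^^ n) x)"
    using prm_nonzero by (simp add: digit_shift_def digit_def field_simps)
  finally show ?case by simp
qed simp

lemma v_sub_digit_sum_le: "v x \<le> 1 \<Longrightarrow> v (x - (\<Sum>j<n. digit x j * prm ^ j)) \<le> rho ^ n"
  using v_digit_shift_power_le_1[of x n] rho_gt_0
  by (simp add: sub_digit_sum_eq v_mult v_prm_power mult_left_le)

lemma v_power_diff_le:
  assumes "v a \<le> Q" "v b \<le> Q"
  shows "v (a ^ i - b ^ i) * Q \<le> v (a - b) * Q ^ i"
proof (cases i)
  case (Suc j)
  have Q0: "Q \<ge> 0" using assms(1) v_nonneg[of a] by linarith
  have "v (\<Sum>k<i. b ^ (i - Suc k) * a ^ k) \<le> Q ^ j"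
  proof (rule v_sum_le)
    fix k assume "k \<in> {..<i}"
    then have ki: "i - Suc k + k = j" using Suc by auto
    have "v (b ^ (i - Suc k) * a ^ k) = v b ^ (i - Suc k) * v a ^ k" by (simp add: v_mult v_power)
    also have "\<dots> \<le> Q ^ (i - Suc k) * Q ^ k"
      using assms by (intro mult_mono power_mono) (auto simp: Q0)
    also have "\<dots> = Q ^ j" using ki by (metis power_add)
    finally show "v (b ^ (i - Suc k) * a ^ k) \<le> Q ^ j" .
  qed (use Q0 in auto)
  then have "v (a ^ i - b ^ i) \<le> v (a - b) * Q ^ j"
    unfolding power_diff_sumr2[of a i b] v_mult by (intro mult_left_mono) auto
  then have "v (a ^ i - b ^ i) * Q \<le> v (a - b) * Q ^ j * Q" using Q0 by (intro mult_right_mono)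
  then show ?thesis using Suc by (simp add: algebra_simps)
qed simp

lemma v_power_linear_remainder_le:
  assumes x: "v x \<le> Q" and e: "v e \<le> Q" and Q: "Q > 0" and r: "r \<ge> 1"
  shows "v ((x + e) ^ r - x ^ r - of_nat r * x ^ (r - 1) * e) * Q ^ 2 \<le> v e ^ 2 * Q ^ r"
proof -
  have xe: "v (x + e) \<le> Q" using x e by (rule v_add_le)
  have e1: "(x + e) ^ r - x ^ r = e * (\<Sum>i<r. x ^ (r - Suc i) * (x + e) ^ i)"
    using power_diff_sumr2[of "x + e" r x] by simp
  have "x ^ (r - Suc i) * x ^ i = x ^ (r - 1)" if "i < r" for i
  proof -
    have "r - Suc i + i = r - 1" using that by arith
    then show ?thesis by (metis power_add)
  qed
  then have e2: "of_nat r * x ^ (r - 1) * e = e * (\<Sum>i<r. x ^ (r - Suc i) * x ^ i)"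
    by (simp add: algebra_simps)
  have e3: "(x + e) ^ r - x ^ r - of_nat r * x ^ (r - 1) * e =
      e * (\<Sum>i<r. x ^ (r - Suc i) * ((x + e) ^ i - x ^ i))"
    unfolding e1 e2 by (simp only: right_diff_distrib sum_subtractf)
  have sb: "v (\<Sum>i<r. x ^ (r - Suc i) * ((x + e) ^ i - x ^ i)) \<le> v e * Q ^ (r - 1) / Q"
  proof (rule v_sum_le)
    fix i assume "i \<in> {..<r}"
    then have ki: "r - Suc i + i = r - 1" by auto
    have "v (x ^ (r - Suc i) * ((x + e) ^ i - x ^ i)) * Q =
        v x ^ (r - Suc i) * (v ((x + e) ^ i - x ^ i) * Q)"
      by (simp add: v_mult v_power)
    also have "\<dots> \<le> Q ^ (r - Suc i) * (v e * Q ^ i)"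
    proof -
      have "v ((x + e) ^ i - x ^ i) * Q \<le> v e * Q ^ i" using v_power_diff_le[OF xe x, of i] by simp
      then show ?thesis by (rule mult_mono[OF power_mono[OF x v_nonneg]]) (use Q in auto)
    qed
    also have "\<dots> = v e * Q ^ (r - 1)" using ki by (metis mult.left_commute power_add)
    finally show "v (x ^ (r - Suc i) * ((x + e) ^ i - x ^ i)) \<le> v e * Q ^ (r - 1) / Q"
      using Q by (simp add: field_simps)
  qed (use Q in auto)
  have "v ((x + e) ^ r - x ^ r - of_nat r * x ^ (r - 1) * e) \<le> v e * (v e * Q ^ (r - 1) / Q)"
    unfolding e3 v_mult using sb by (intro mult_left_mono) auto
  then have "v ((x + e) ^ r - x ^ r - of_nat r * x ^ (r - 1) * e) * Q ^ 2 \<le>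
      v e * (v e * Q ^ (r - 1) / Q) * Q ^ 2"
    using Q by (intro mult_right_mono) auto
  also have "\<dots> = v e ^ 2 * (Q ^ (r - 1) * Q)" using Q by (simp add: power2_eq_square field_simps)
  also have "Q ^ (r - 1) * Q = Q ^ r" using r by (metis Suc_diff_le diff_Suc_1 power_Suc2)
  finally show ?thesis .
qed

lemma v_of_nat_ge_1_if_not_dvd:
  fixes p n :: nat
  assumes "prime p" "v (of_nat p) < 1" "\<not> p dvd n"
  shows "v (of_nat n) \<ge> 1"
proof -
  have "coprime (int p) (int n)" using prime_imp_coprime[OF assms(1,3)] by simp
  then obtain u w :: int where "u * int p + w * int n = 1"
    using bezout_int[of "int p" "int n"] by (auto simp: coprime_iff_gcd_eq_1)
  then have "(of_int u * of_nat p + of_int w * of_nat n :: 'a) = 1"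
    by (metis (mono_tags, opaque_lifting) of_int_1 of_int_add of_int_mult of_int_of_nat_eq)
  then have "1 \<le> max (v (of_int u * of_nat p)) (v (of_int w * of_nat n))"
    using v_ultrametric[of "of_int u * of_nat p" "of_int w * (of_nat n :: 'a)"] by simp
  moreover have "v (of_int u :: 'a) * v (of_nat p :: 'a) \<le> 1 * v (of_nat p :: 'a)"
    using v_of_int_le_1[of u] by (intro mult_right_mono) auto
  then have "v (of_int u * of_nat p :: 'a) < 1" using assms(2) by (simp add: v_mult)
  ultimately have "1 \<le> v (of_int w :: 'a) * v (of_nat n :: 'a)" by (simp add: v_mult)
  also have "\<dots> \<le> v (of_nat n :: 'a)"
    using v_of_int_le_1[of w] by (intro mult_left_le_one_le) auto
  finally show ?thesis .
qed

lemma v_of_nat_ge_power_if_not_dvd: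
  fixes p :: nat
  assumes "prime p" "v (of_nat p) < 1"
  shows "K \<ge> 1 \<Longrightarrow> n > 0 \<Longrightarrow> \<not> p ^ K dvd n \<Longrightarrow> v (of_nat n :: 'a) \<ge> v (of_nat p :: 'a) ^ (K - 1)"
proof (induction K arbitrary: n)
  case (Suc K)
  show ?case
  proof (cases "p dvd n")
    case False
    then have "v (of_nat n :: 'a) \<ge> 1" using v_of_nat_ge_1_if_not_dvd[OF assms] by blast
    moreover have "v (of_nat p :: 'a) ^ (Suc K - 1) \<le> 1" using assms(2) by (simp add: power_le_one)
    ultimately show ?thesis by linarith
  next
    case True
    then obtain n' where n': "n = p * n'" by blast
    have "K \<ge> 1" using Suc.prems True by (cases K) auto
    have "n' > 0" using Suc.prems n' by (auto intro: gr0I)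
    moreover have "\<not> p ^ K dvd n'" using Suc.prems n' by (auto simp: mult_dvd_mono)
    ultimately have IH: "v (of_nat n' :: 'a) \<ge> v (of_nat p :: 'a) ^ (K - 1)" using Suc.IH \<open>K \<ge> 1\<close>
      by blast
    have "v (of_nat p :: 'a) * v (of_nat p :: 'a) ^ (K - 1)
        \<le> v (of_nat p :: 'a) * v (of_nat n' :: 'a)"
      using IH by (intro mult_left_mono) auto
    then show ?thesis using \<open>K \<ge> 1\<close> by (simp add: n' v_mult power_eq_if split: if_splits)
  qed
qed simp

section \<open>Integer parts\<close>

lemma p_tendsto_unique:
  assumes "p_tendsto v f L" "p_tendsto v f L'" shows "L = L'"
proof -
  have "(\<lambda>n. max (v (f n - L)) (v (f n - L'))) \<longlonglongrightarrow> max 0 0"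
    using assms unfolding p_tendsto_def by (intro tendsto_max)
  moreover have "\<forall>n. v (L - L') \<le> max (v (f n - L)) (v (f n - L'))"
    using v_triangle v_commute by (metis max.commute)
  ultimately have "v (L - L') \<le> 0"
    by (intro tendsto_le[OF trivial_limit_sequentially _ tendsto_const]) auto
  then show ?thesis using v_nonneg[of "L - L'"] by simp
qed

lemma p_tendsto_dist_le:
  assumes "p_tendsto v f L" "\<forall>\<^sub>F n in sequentially. v (f n - y) \<le> B"
  shows "v (L - y) \<le> B"
proof -
  obtain N where N: "\<And>n. n \<ge> N \<Longrightarrow> v (f n - y) \<le> B"
    using assms(2) by (auto simp: eventually_sequentially)
  then have "0 \<le> B" using v_nonneg[of "f N - y"] by (meson order.trans order.refl)
  have "(\<lambda>n. max (v (f n - L)) B) \<longlonglongrightarrow> max 0 B"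
    using assms(1) unfolding p_tendsto_def by (intro tendsto_max tendsto_const)
  moreover have "v (L - y) \<le> max (v (f n - L)) B" if "n \<ge> N" for n
    using v_triangle[of L y "f n"] N[OF that] v_commute[of L "f n"] by linarith
  ultimately have "v (L - y) \<le> max 0 B"
    by (intro tendsto_le[OF trivial_limit_sequentially _ tendsto_const])
      (auto simp: eventually_sequentially)
  then show ?thesis using \<open>0 \<le> B\<close> by simp
qed

lemma exists_scaled_le_1: "\<exists>M::nat. v (y * prm ^ M) \<le> 1"
proof (cases "y = 0")
  case False
  then have "v y > 0" using v_pos by blast
  then obtain M where "rho ^ M < 1 / v y"
    using real_arch_pow_inv[of "1 / v y" rho] rho_gt_0 rho_less_1 by auto
  then have "v y * rho ^ M \<le> 1" using \<open>v y > 0\<close> by (simp add: field_simps)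
  then show ?thesis by (auto simp: v_mult v_prm_power)
qed simp

lemma v_digit_term_le_1:
  assumes "c \<in> C" "n \<ge> 0" shows "v (c * prm powi n) \<le> 1"
proof -
  have "v (prm powi n) = rho ^ nat n" using assms by (simp add: v_power_int power_int_def v_power)
  then show ?thesis using v_C_le_1[OF assms(1)] rho_power_le_1[of "nat n"]
    by (simp add: v_mult mult_le_one)
qed

lemma digit_exp_exists: "\<exists>c. digit_exp v prm C y c"
proof -
  obtain M :: nat where M: "v (y * prm ^ M) \<le> 1" using exists_scaled_le_1 by blast
  define x where "x = y * prm ^ M"
  define c where "c n = (if n < - int M then 0 else digit x (nat (n + int M)))" for n
  have cC: "\<forall>n. c n \<in> C" using digit_in_C[of x] M zero_in_C by (auto simp: c_def x_def)
  have cz: "\<forall>n < - int M. c n = 0" by (auto simp: c_def)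
  have S: "(\<Sum>n\<in>{- int m..int m}. c n * prm powi n) = (\<Sum>j<m + M + 1. digit x j * prm ^ j) / prm ^ M"
    if "m \<ge> M" for m
  proof -
    have "{- int m..int m} = {- int m..<- int M} \<union> {- int M..int m}" using that by auto
    then have "(\<Sum>n\<in>{- int m..int m}. c n * prm powi n) =
        (\<Sum>n\<in>{- int m..<- int M}. c n * prm powi n) + (\<Sum>n\<in>{- int M..int m}. c n * prm powi n)"
      by (simp add: sum.union_disjoint[symmetric] ivl_disj_int)
    also have "(\<Sum>n\<in>{- int m..<- int M}. c n * prm powi n) = 0"
      by (auto simp: c_def intro!: sum.neutral)
    also have "(\<Sum>n\<in>{- int M..int m}. c n * prm powi n) =
        (\<Sum>j<m + M + 1. c (- int M + int j) * prm powi (- int M + int j))"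
      by (subst sum_int_interval_reindex) (simp add: nat_add_distrib)
    also have "\<dots> = (\<Sum>j<m + M + 1. digit x j * prm ^ j / prm ^ M)"
      using prm_nonzero by (intro sum.cong) (auto simp: c_def power_int_diff)
    finally show ?thesis by (simp only: sum_divide_distrib add_0_left)
  qed
  have "p_tendsto v (\<lambda>m. \<Sum>n\<in>{- int m..int m}. c n * prm powi n) y"
    unfolding p_tendsto_def
  proof (rule tendsto_sandwich[of "\<lambda>_. 0" _ _ "\<lambda>m. rho ^ (m + 1)"])
    show "\<forall>\<^sub>F m in sequentially. v ((\<Sum>n\<in>{- int m..int m}. c n * prm powi n) - y) \<le> rho ^ (m + 1)"
      unfolding eventually_sequentially
    proof (intro exI allI impI)
      fix m assume "M \<le> m"
      have "(\<Sum>n\<in>{- int m..int m}. c n * prm powi n) - y =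
          - ((x - (\<Sum>j<m + M + 1. digit x j * prm ^ j)) / prm ^ M)"
        using S[OF \<open>M \<le> m\<close>] prm_nonzero by (simp add: x_def field_simps)
      then have "v ((\<Sum>n\<in>{- int m..int m}. c n * prm powi n) - y) =
          v (x - (\<Sum>j<m + M + 1. digit x j * prm ^ j)) / rho ^ M"
        by (simp add: v_divide v_prm_power)
      also have "\<dots> \<le> rho ^ (m + M + 1) / rho ^ M"
        using v_sub_digit_sum_le[of x "m + M + 1"] M rho_gt_0 by (simp add: x_def divide_right_mono)
      also have "\<dots> = rho ^ (m + 1)" using rho_gt_0 by (simp add: power_add)
      finally show "v ((\<Sum>n\<in>{- int m..int m}. c n * prm powi n) - y) \<le> rho ^ (m + 1)" .
    qed
    show "(\<lambda>m. rho ^ (m + 1)) \<longlonglongrightarrow> 0"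
      using LIMSEQ_Suc[OF LIMSEQ_power_zero[of rho]] rho_gt_0 rho_less_1 by simp
  qed simp_all
  then show ?thesis unfolding digit_exp_def using cC cz by blast
qed

lemma digit_exp_vanishes_below:
  assumes "digit_exp v prm C y c" shows "\<exists>N::nat. \<forall>n < - int N. c n = 0"
proof -
  obtain N :: int where "\<forall>n<N. c n = 0" using assms by (auto simp: digit_exp_def)
  then show ?thesis by (intro exI[of _ "nat (- N)"]) auto
qed

definition frac_sum :: "nat \<Rightarrow> (int \<Rightarrow> 'a) \<Rightarrow> 'a" where
  "frac_sum N c = (\<Sum>n\<in>{- int N..-1}. c n * prm powi n)"

lemma frac_sum_mono_neutral:
  assumes "\<forall>n < - int N. c n = 0" "N \<le> N'" shows "frac_sum N' c = frac_sum N c"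
  unfolding frac_sum_def using assms by (intro sum.mono_neutral_right) auto

lemma p_tendsto_int_digit_sums:
  assumes "digit_exp v prm C y c" "\<forall>n < - int N. c n = 0"
  shows "p_tendsto v (\<lambda>m. \<Sum>n\<in>{0..int m}. c n * prm powi n) (y - frac_sum N c)"
proof -
  have t: "(\<lambda>m. v ((\<Sum>n\<in>{- int m..int m}. c n * prm powi n) - y)) \<longlonglongrightarrow> 0"
    using assms by (auto simp: digit_exp_def p_tendsto_def)
  have ev: "\<forall>\<^sub>F m in sequentially. v ((\<Sum>n\<in>{- int m..int m}. c n * prm powi n) - y) =
      v ((\<Sum>n\<in>{0..int m}. c n * prm powi n) - (y - frac_sum N c))"
    unfolding eventually_sequentially
  proof (intro exI allI impI)
    fix m assume "N \<le> m"
    have "{- int m..int m} = {- int m..-1} \<union> {0..int m}" by auto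
    then have "(\<Sum>n\<in>{- int m..int m}. c n * prm powi n) =
        (\<Sum>n\<in>{- int m..-1}. c n * prm powi n) + (\<Sum>n\<in>{0..int m}. c n * prm powi n)"
      by (simp add: sum.union_disjoint[symmetric] ivl_disj_int)
    moreover have "(\<Sum>n\<in>{- int m..-1}. c n * prm powi n) = frac_sum N c"
      using frac_sum_mono_neutral[OF assms(2) \<open>N \<le> m\<close>] by (simp add: frac_sum_def)
    ultimately show "v ((\<Sum>n\<in>{- int m..int m}. c n * prm powi n) - y) =
      v ((\<Sum>n\<in>{0..int m}. c n * prm powi n) - (y - frac_sum N c))" by (simp add: algebra_simps)
  qed
  show ?thesis unfolding p_tendsto_def using Lim_transform_eventually[OF t ev] .
qed

lemma v_sub_frac_sum_le_1:
  assumes "digit_exp v prm C y c" "\<forall>n < - int N. c n = 0"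
  shows "v (y - frac_sum N c) \<le> 1"
proof -
  have "\<forall>n. c n \<in> C" using assms by (auto simp: digit_exp_def)
  then have "v (\<Sum>n\<in>{0..int m}. c n * prm powi n) \<le> 1" for m
    by (intro v_sum_le v_digit_term_le_1) auto
  then show ?thesis using p_tendsto_dist_le[OF p_tendsto_int_digit_sums[OF assms], of 0 1] by simp
qed

lemma digit_sum_small_imp_zero:
  assumes "\<forall>j<N. f j = 0 \<or> v (f j) = 1" "v (\<Sum>j<N. f j * prm ^ j) \<le> rho ^ N"
  shows "\<forall>j<N. f j = 0"
  using assms
proof (induction N arbitrary: f)
  case (Suc N)
  define T where "T = (\<Sum>j<N. f (Suc j) * prm ^ j)"
  have S: "(\<Sum>j<Suc N. f j * prm ^ j) = f 0 + prm * T"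
    unfolding T_def by (subst sum.lessThan_Suc_shift) (simp add: sum_distrib_left algebra_simps)
  have "v T \<le> 1" unfolding T_def
  proof (intro v_sum_le)
    fix j assume "j \<in> {..<N}"
    then have "v (f (Suc j)) \<le> 1" using Suc.prems(1)
      by (metis Suc_mono lessThan_iff order.refl v_zero zero_le_one)
    then show "v (f (Suc j) * prm ^ j) \<le> 1"
      using rho_power_le_1[of j] by (simp add: v_mult v_prm_power mult_le_one)
  qed simp
  then have vpT: "v (prm * T) \<le> rho" using rho_gt_0 by (simp add: v_mult mult_left_le)
  have "rho ^ Suc N \<le> rho" using rho_power_antimono[of 1 "Suc N"] by simp
  then have vS: "v (f 0 + prm * T) \<le> rho" using Suc.prems(2) S by simp
  have "v (f 0) \<le> rho" using v_diff_le[OF vS vpT] by simp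
  then have f0: "f 0 = 0" using Suc.prems(1) rho_less_1 by fastforce
  have "v (prm * T) \<le> rho ^ Suc N" using Suc.prems(2) S f0 by simp
  then have "v T \<le> rho ^ N" using rho_gt_0 by (simp add: v_mult)
  moreover have "\<forall>j<N. f (Suc j) = 0 \<or> v (f (Suc j)) = 1" using Suc.prems(1) by simp
  ultimately have "\<forall>j<N. f (Suc j) = 0" using Suc.IH[of "\<lambda>j. f (Suc j)"] unfolding T_def by blast
  then show ?case using f0 by (metis less_Suc_eq_0_disj)
qed simp

lemma frac_sum_eq_if_close:
  assumes "digit_exp v prm C y c" "\<forall>n < - int N. c n = 0"
    and "digit_exp v prm C y' c'" "\<forall>n < - int N. c' n = 0"
    and "v (y - y') \<le> 1"
  shows "frac_sum N c = frac_sum N c'"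
proof -
  have cC: "\<forall>n. c n \<in> C" "\<forall>n. c' n \<in> C" using assms by (auto simp: digit_exp_def)
  have eq: "frac_sum N c - frac_sum N c' = ((y' - frac_sum N c') - (y - frac_sum N c)) + (y - y')"
    by (simp add: algebra_simps)
  have "v ((y' - frac_sum N c') - (y - frac_sum N c)) \<le> 1"
    using v_sub_frac_sum_le_1[OF assms(1,2)] v_sub_frac_sum_le_1[OF assms(3,4)]
      by (rule v_diff_le[rotated])
  then have v1: "v (frac_sum N c - frac_sum N c') \<le> 1"
    unfolding eq using assms(5) by (rule v_add_le)
  define f where "f j = c (- int N + int j) - c' (- int N + int j)" for j
  have "frac_sum N c - frac_sum N c' = (\<Sum>n\<in>{- int N..-1}. (c n - c' n) * prm powi n)"
    by (simp add: frac_sum_def sum_subtractf algebra_simps)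
  also have "\<dots> = (\<Sum>j<N. f j * prm powi (- int N + int j))"
    by (subst sum_int_interval_reindex) (simp add: f_def)
  finally have PP: "(frac_sum N c - frac_sum N c') * prm ^ N = (\<Sum>j<N. f j * prm ^ j)"
    using prm_nonzero by (simp add: sum_distrib_right power_int_diff)
  have "v (\<Sum>j<N. f j * prm ^ j) \<le> rho ^ N"
    using v1 rho_gt_0 by (simp add: PP[symmetric] v_mult v_prm_power mult_left_le)
  moreover have "\<forall>j<N. f j = 0 \<or> v (f j) = 1"
    using v_C_diff cC unfolding f_def by (metis right_minus_eq)
  ultimately have f0: "\<forall>j<N. f j = 0" by (rule digit_sum_small_imp_zero[rotated])
  show ?thesis unfolding frac_sum_def
  proof (rule sum.cong[OF refl])
    fix n assume "n \<in> {- int N..-1}"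
    then have "f (nat (n + int N)) = 0" using f0 by auto
    then show "c n * prm powi n = c' n * prm powi n" using \<open>n \<in> _\<close> by (simp add: f_def)
  qed
qed

lemma int_part_eq:
  assumes "digit_exp v prm C y c" "\<forall>n < - int N. c n = 0"
  shows "int_part v prm C y = y - frac_sum N c"
  unfolding int_part_def
proof (rule the_equality)
  show "\<exists>c'. digit_exp v prm C y c' \<and>
      p_tendsto v (\<lambda>m. \<Sum>n\<in>{0..int m}. c' n * prm powi n) (y - frac_sum N c)"
    using assms p_tendsto_int_digit_sums by blast
next
  fix w assume "\<exists>c'. digit_exp v prm C y c' \<and> p_tendsto v (\<lambda>m. \<Sum>n\<in>{0..int m}. c' n * prm powi n) w"
  then obtain c' where c': "digit_exp v prm C y c'"
      "p_tendsto v (\<lambda>m. \<Sum>n\<in>{0..int m}. c' n * prm powi n) w"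
    by blast
  obtain N' where N': "\<forall>n < - int N'. c' n = 0" using digit_exp_vanishes_below[OF c'(1)] by blast
  have w: "w = y - frac_sum N' c'"
    using p_tendsto_unique[OF c'(2) p_tendsto_int_digit_sums[OF c'(1) N']] .
  define N2 where "N2 = max N N'"
  have z1: "\<forall>n < - int N2. c n = 0" and z2: "\<forall>n < - int N2. c' n = 0"
    using assms(2) N' by (auto simp: N2_def)
  have "frac_sum N' c' = frac_sum N2 c'" using frac_sum_mono_neutral[OF N', of N2]
    by (simp add: N2_def)
  also have "\<dots> = frac_sum N2 c" using frac_sum_eq_if_close[OF c'(1) z2 assms(1) z1] by simp
  also have "\<dots> = frac_sum N c" using frac_sum_mono_neutral[OF assms(2), of N2] by (simp add: N2_def)
  finally show "w = y - frac_sum N c" using w by simp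
qed

lemma v_int_part_le_1: "v (int_part v prm C y) \<le> 1"
proof -
  obtain c where c: "digit_exp v prm C y c" using digit_exp_exists by blast
  obtain N where N: "\<forall>n < - int N. c n = 0" using digit_exp_vanishes_below[OF c] by blast
  show ?thesis using int_part_eq[OF c N] v_sub_frac_sum_le_1[OF c N] by simp
qed

lemma int_part_diff:
  assumes "v (y - y') \<le> 1"
  shows "int_part v prm C y - int_part v prm C y' = y - y'"
proof -
  obtain c where c: "digit_exp v prm C y c" using digit_exp_exists by blast
  obtain N where N: "\<forall>n < - int N. c n = 0" using digit_exp_vanishes_below[OF c] by blast
  obtain c' where c': "digit_exp v prm C y' c'" using digit_exp_exists by blast
  obtain N' where N': "\<forall>n < - int N'. c' n = 0" using digit_exp_vanishes_below[OF c'] by blast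
  define N2 where "N2 = max N N'"
  have z1: "\<forall>n < - int N2. c n = 0" and z2: "\<forall>n < - int N2. c' n = 0"
    using N N' by (auto simp: N2_def)
  have "frac_sum N2 c = frac_sum N2 c'" using frac_sum_eq_if_close[OF c z1 c' z2 assms] .
  then show ?thesis using int_part_eq[OF c z1] int_part_eq[OF c' z2] by simp
qed

section \<open>Hausdorff measure of subsets of a disc\<close>

lemma p_diam_le:
  assumes "\<And>x y. x \<in> U \<Longrightarrow> y \<in> U \<Longrightarrow> v (x - y) \<le> B"
  shows "p_diam v U \<le> ennreal B"
  unfolding p_diam_def using assms by (intro SUP_least ennreal_leI) auto

lemma v_le_p_diam:
  assumes "x \<in> U" "y \<in> U" "p_diam v U \<le> ennreal d"
  shows "v (x - y) \<le> enn2real (p_diam v U)"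
proof -
  have "ennreal (v (x - y)) \<le> (SUP y\<in>U. ennreal (v (x - y)))" by (rule SUP_upper[OF assms(2)])
  also have "\<dots> \<le> p_diam v U" unfolding p_diam_def by (rule SUP_upper[OF assms(1)])
  finally have "ennreal (v (x - y)) \<le> p_diam v U" .
  moreover have "p_diam v U < \<infinity>" using assms(3) by (simp add: le_less_trans)
  ultimately show ?thesis using enn2real_mono by fastforce
qed

lemma hcontent_le_cover:
  assumes "S \<subseteq> (\<Union>i. U i)" "\<And>i. p_diam v (U i) \<le> ennreal d"
  shows "hcontent v s d S \<le> (\<Sum>i. if U i = {} then 0 else if s = 0 then 1
            else ennreal (enn2real (p_diam v (U i)) powr s))"
  unfolding hcontent_def using assms by (intro INF_lower) auto

lemma finite_cover_small_discs:
  assumes S: "S \<subseteq> {x. v (x - z) \<le> delta}" and M: "delta * rho ^ M \<le> 1"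
  shows "\<exists>Cen. finite Cen \<and> card Cen \<le> card C ^ (P + M) \<and>
      (\<forall>y\<in>S. \<exists>w\<in>Cen. v (y - w) \<le> rho ^ P)"
proof -
  define N where "N = P + M"
  define Cen where "Cen = (\<lambda>c. z + (\<Sum>j<N. c j * prm ^ j) / prm ^ M) ` (PiE {..<N} (\<lambda>_. C))"
  have fin: "finite (PiE {..<N} (\<lambda>_. C))" using finite_C by (intro finite_PiE) auto
  have "card Cen \<le> card (PiE {..<N} (\<lambda>_. C))" unfolding Cen_def by (rule card_image_le[OF fin])
  also have "\<dots> = card C ^ N" by (simp add: card_PiE)
  finally have card: "card Cen \<le> card C ^ (P + M)" by (simp add: N_def)
  have cov: "\<exists>w\<in>Cen. v (y - w) \<le> rho ^ P" if "y \<in> S" for y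
  proof -
    define x where "x = (y - z) * prm ^ M"
    have "v x = v (y - z) * rho ^ M" by (simp add: x_def v_mult v_prm_power)
    also have "\<dots> \<le> delta * rho ^ M" using S that rho_gt_0 by (auto intro: mult_right_mono)
    finally have vx: "v x \<le> 1" using M by simp
    define c where "c = restrict (digit x) {..<N}"
    have cP: "c \<in> PiE {..<N} (\<lambda>_. C)" using digit_in_C[OF vx] by (auto simp: c_def)
    have sumc: "(\<Sum>j<N. c j * prm ^ j) = (\<Sum>j<N. digit x j * prm ^ j)" by (simp add: c_def)
    define w where "w = z + (\<Sum>j<N. c j * prm ^ j) / prm ^ M"
    have wC: "w \<in> Cen" unfolding Cen_def w_def using cP by blast
    have "y - w = (x - (\<Sum>j<N. digit x j * prm ^ j)) / prm ^ M"
      using prm_nonzero by (simp add: w_def x_def sumc field_simps)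
    then have "v (y - w) = v (x - (\<Sum>j<N. digit x j * prm ^ j)) / rho ^ M"
      by (simp add: v_divide v_prm_power)
    also have "\<dots> \<le> rho ^ N / rho ^ M"
      using v_sub_digit_sum_le[OF vx] rho_gt_0 by (simp add: divide_right_mono)
    also have "\<dots> = rho ^ P" using rho_gt_0 prm_nonzero by (simp add: N_def power_add)
    finally show ?thesis using wC by blast
  qed
  show ?thesis using card cov Cen_def fin by blast
qed

lemma hcontent_disc_le:
  assumes S: "S \<subseteq> {x. v (x - z) \<le> delta}" and M: "delta * rho ^ M \<le> 1"
    and s: "s > 0" and d: "rho ^ P \<le> d"
  shows "hcontent v s d S \<le> ennreal (real (card C) ^ (P + M) * (rho ^ P) powr s)"
proof -
  obtain Cen where Cen: "finite Cen" "card Cen \<le> card C ^ (P + M)"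
      "\<forall>y\<in>S. \<exists>w\<in>Cen. v (y - w) \<le> rho ^ P"
    using finite_cover_small_discs[OF S M] by blast
  obtain f where f: "bij_betw f {0..<card Cen} Cen" using ex_bij_betw_nat_finite[OF Cen(1)] by blast
  define U where "U i = (if i < card Cen then {y. v (y - f i) \<le> rho ^ P} else {})" for i
  have cover: "S \<subseteq> (\<Union>i. U i)"
  proof
    fix y assume "y \<in> S"
    then obtain w where w: "w \<in> Cen" "v (y - w) \<le> rho ^ P" using Cen(3) by blast
    have "w \<in> f ` {0..<card Cen}" using f w by (simp add: bij_betw_def)
    then obtain i where "i < card Cen" "f i = w" by auto
    then show "y \<in> (\<Union>i. U i)" using w by (auto simp: U_def)
  qed
  have diam: "p_diam v (U i) \<le> ennreal (rho ^ P)" for i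
  proof (rule p_diam_le)
    fix x y assume "x \<in> U i" "y \<in> U i"
    then have "v (x - f i) \<le> rho ^ P" "v (y - f i) \<le> rho ^ P" by (auto simp: U_def split: if_splits)
    then show "v (x - y) \<le> rho ^ P" using v_triangle[of x y "f i"] v_commute[of y "f i"] by auto
  qed
  have diam_d: "p_diam v (U i) \<le> ennreal d" for i using diam[of i] d
    by (meson ennreal_leI order_trans)
  define t where "t i = (if U i = {} then 0 else if s = 0 then 1
            else ennreal (enn2real (p_diam v (U i)) powr s))" for i
  have t_le: "t i \<le> ennreal ((rho ^ P) powr s)" for i
  proof -
    have "enn2real (p_diam v (U i)) \<le> rho ^ P"
      using enn2real_mono[OF diam[of i]] rho_gt_0 by simp
    then have "enn2real (p_diam v (U i)) powr s \<le> (rho ^ P) powr s"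
      using s by (intro powr_mono2) auto
    then show ?thesis using s by (auto simp: t_def intro: ennreal_leI)
  qed
  have t0: "t i = 0" if "i \<notin> {..<card Cen}" for i using that by (simp add: t_def U_def)
  have "hcontent v s d S \<le> (\<Sum>i. t i)" unfolding t_def by (rule hcontent_le_cover[OF cover diam_d])
  also have "(\<Sum>i. t i) = (\<Sum>i<card Cen. t i)" by (rule suminf_finite) (use t0 in auto)
  also have "\<dots> \<le> (\<Sum>i<card Cen. ennreal ((rho ^ P) powr s))" by (intro sum_mono t_le)
  also have "\<dots> = ennreal (real (card Cen) * (rho ^ P) powr s)"
    by (simp add: ennreal_of_nat_eq_real_of_nat ennreal_mult)
  also have "\<dots> \<le> ennreal (real (card C) ^ (P + M) * (rho ^ P) powr s)"
  proof (intro ennreal_leI mult_right_mono)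
    show "real (card Cen) \<le> real (card C) ^ (P + M)" using Cen(2)
      by (metis of_nat_le_iff of_nat_power)
  qed simp
  finally show ?thesis .
qed

lemma hmeasure_disc_eq_0:
  assumes S: "S \<subseteq> {x. v (x - z) \<le> delta}" and "delta > 0" and s: "s > 1"
  shows "hmeasure v s S = 0"
proof -
  obtain M where "rho ^ M < 1 / delta"
    using real_arch_pow_inv[of "1 / delta" rho] rho_gt_0 rho_less_1 \<open>delta > 0\<close> by auto
  then have M: "delta * rho ^ M \<le> 1" using \<open>delta > 0\<close> by (simp add: field_simps)
  define q where "q = real (card C)"
  have q: "q * rho = 1" using rho_eq card_C_gt_1 by (simp add: q_def)
  define g where "g P = q ^ (P + M) * (rho ^ P) powr s" for P
  have g: "g P = q ^ M * (rho powr (s - 1)) ^ P" for P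
  proof -
    have "(rho ^ P) powr s = (rho powr s) ^ P" using rho_gt_0 by (rule powr_power_swap)
    moreover have "q * rho powr s = rho powr (s - 1)"
    proof -
      have "q = 1 / rho" using q prm_nonzero by (simp add: eq_divide_eq)
      then show ?thesis using rho_gt_0 by (simp add: powr_diff)
    qed
    ultimately show ?thesis
      by (simp add: g_def power_add power_mult_distrib[symmetric] algebra_simps)
  qed
  have "rho powr (s - 1) < 1" using powr_less_mono2[of "s - 1" rho 1] rho_gt_0 rho_less_1 s by simp
  then have "(\<lambda>P. (rho powr (s - 1)) ^ P) \<longlonglongrightarrow> 0" by (intro LIMSEQ_power_zero) auto
  then have "g \<longlonglongrightarrow> 0" unfolding g by (intro tendsto_mult_right_zero)
  then have g_lim: "(\<lambda>P. ennreal (g P)) \<longlonglongrightarrow> ennreal 0" by (intro tendsto_ennrealI)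
  have "hcontent v s d S = 0" if d: "d > 0" for d
  proof -
    obtain P0 where "rho ^ P0 < d" using real_arch_pow_inv[OF d rho_less_1] by auto
    then have "\<forall>\<^sub>F P in sequentially. hcontent v s d S \<le> ennreal (g P)"
      unfolding eventually_sequentially g_def q_def
      using rho_power_antimono s by (intro exI[of _ P0] allI impI hcontent_disc_le[OF S M]) force+
    then have "hcontent v s d S \<le> ennreal 0"
      by (intro tendsto_le[OF trivial_limit_sequentially g_lim tendsto_const])
    then show ?thesis by simp
  qed
  then show ?thesis unfolding hmeasure_def by (simp add: SUP_constant bot_ennreal)
qed

text \<open>The product measure digit_space lives on all sequences in 'a, those with an entry
  outside C forming a null set; to_digit turns every entry into a digit.\<close>

definition to_digit :: "'a \<Rightarrow> 'a" where
  "to_digit a = (if a \<in> C then a else 0)"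

lemma to_digit_in_C: "to_digit a \<in> C"
  using zero_in_C by (simp add: to_digit_def)

definition digit_space :: "(nat \<Rightarrow> 'a) measure" where
  "digit_space = PiM UNIV (\<lambda>_. measure_pmf (pmf_of_set C))"

lemma emeasure_to_digit_eq:
  assumes "c \<in> C"
  shows "emeasure (measure_pmf (pmf_of_set C)) {a. to_digit a = c} = ennreal rho"
proof -
  have "C \<noteq> {}" using zero_in_C by auto
  moreover have "C \<inter> {a. to_digit a = c} = {c}" using assms by (auto simp: to_digit_def)
  ultimately show ?thesis
    using emeasure_pmf_of_set[OF _ finite_C, of "{a. to_digit a = c}"] card_C_gt_1
    by (simp add: rho_eq divide_ennreal[symmetric] ennreal_1[symmetric] del: ennreal_1)
qed

lemma prob_space_digit_space: "prob_space digit_space"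
  unfolding digit_space_def by (rule prob_space_PiM) (simp add: prob_space_measure_pmf)

lemma space_digit_space [simp]: "space digit_space = UNIV"
  by (simp add: digit_space_def space_PiM)

lemma digit_cylinder_sets: "{w. \<forall>j\<in>J. w j \<in> X j} \<in> sets digit_space"
proof -
  have meas: "{w \<in> space digit_space. w j \<in> X} \<in> sets digit_space" for j X
  proof -
    have "(\<lambda>w. w j) \<in> measurable digit_space (measure_pmf (pmf_of_set C))"
      unfolding digit_space_def by (rule measurable_component_singleton) simp
    from measurable_sets[OF this, of X] show ?thesis by (simp add: vimage_def Int_def conj_commute)
  qed
  have "{w \<in> space digit_space. \<forall>j. j \<in> J \<longrightarrow> w j \<in> X j} \<in> sets digit_space"
  proof (rule sets.sets_Collect_countable_All)
    fix j
    show "{w \<in> space digit_space. j \<in> J \<longrightarrow> w j \<in> X j} \<in> sets digit_space"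
      using meas[of j "X j"] sets.top[of digit_space] by (cases "j \<in> J") auto
  qed
  then show ?thesis by (simp add: Ball_def)
qed

lemma emeasure_digit_cylinder:
  assumes "finite J" "\<And>j. c j \<in> C"
  shows "emeasure digit_space {w. \<forall>j\<in>J. to_digit (w j) = c j} = ennreal (rho ^ card J)"
proof -
  interpret product_prob_space "\<lambda>_::nat. measure_pmf (pmf_of_set C)" UNIV
    by (auto simp: product_prob_space_def product_prob_space_axioms_def product_sigma_finite_def
        prob_space_measure_pmf prob_space_imp_sigma_finite)
  have "emeasure digit_space {w \<in> space digit_space. \<forall>j\<in>J. w j \<in> {a. to_digit a = c j}} =
      (\<Prod>j\<in>J. emeasure (measure_pmf (pmf_of_set C)) {a. to_digit a = c j})"
    unfolding digit_space_def by (rule emeasure_PiM_Collect) (use assms in auto)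
  also have "\<dots> = (\<Prod>j\<in>J. ennreal rho)" using assms by (intro prod.cong refl emeasure_to_digit_eq)
  also have "\<dots> = ennreal (rho ^ card J)" using rho_gt_0 by (simp add: prod_ennreal ennreal_power)
  finally show ?thesis by simp
qed

text \<open>Mass distribution: the digits at the free positions j are uniformly distributed, and
  a set of diameter D can only contain images of sequences that agree at every free position
  j with rho ^ j > D.\<close>

lemma emeasure_agreeing_digits_le_power:
  fixes free :: "nat \<Rightarrow> bool"
  assumes count: "s * real P \<le> real (card {j. j < P \<and> free j}) + K0"
    and P: "\<And>j. j < P \<Longrightarrow> D < rho ^ j"
  shows "ennreal (rho powr K0) *
      emeasure digit_space {w. \<forall>j. free j \<and> D < rho ^ j \<longrightarrow> to_digit (w j) = to_digit (w0 j)}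
      \<le> ennreal ((rho ^ P) powr s)"
proof -
  define Z where "Z = {w. \<forall>j. free j \<and> D < rho ^ j \<longrightarrow> to_digit (w j) = to_digit (w0 j)}"
  define J where "J = {j. j < P \<and> free j}"
  have "finite J" by (simp add: J_def)
  have "Z \<subseteq> {w. \<forall>j\<in>J. w j \<in> {a. to_digit a = to_digit (w0 j)}}" using P by (auto simp: Z_def J_def)
  then have "emeasure digit_space Z \<le> emeasure digit_space {w. \<forall>j\<in>J. w j \<in> {a. to_digit a
      = to_digit (w0 j)}}"
    by (rule emeasure_mono[OF _ digit_cylinder_sets])
  also have "\<dots> = ennreal (rho ^ card J)"
    using emeasure_digit_cylinder[OF \<open>finite J\<close> to_digit_in_C] by simp
  finally have m: "emeasure digit_space Z \<le> ennreal (rho ^ card J)" .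
  have "rho ^ card J = rho powr real (card J)" using rho_gt_0 by (simp add: powr_realpow)
  also have "\<dots> \<le> rho powr (s * real P - K0)"
    using count rho_gt_0 rho_less_1 by (intro powr_mono') (auto simp: J_def)
  finally have "rho powr K0 * rho ^ card J \<le> rho powr K0 * rho powr (s * real P - K0)"
    by (intro mult_left_mono) auto
  also have "\<dots> = rho powr (s * real P)" by (simp add: powr_add[symmetric])
  also have "\<dots> = (rho ^ P) powr s" using rho_gt_0
    by (simp add: powr_realpow[symmetric] powr_powr mult.commute)
  finally have "ennreal (rho powr K0 * rho ^ card J) \<le> ennreal ((rho ^ P) powr s)"
    by (rule ennreal_leI)
  then have "ennreal (rho powr K0) * ennreal (rho ^ card J) \<le> ennreal ((rho ^ P) powr s)"
    using rho_gt_0 by (subst ennreal_mult[symmetric]) auto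
  moreover have "ennreal (rho powr K0) * emeasure digit_space Z
      \<le> ennreal (rho powr K0) * ennreal (rho ^ card J)"
    using m by (rule mult_left_mono) simp
  ultimately show ?thesis unfolding Z_def by (rule order_trans[rotated])
qed

lemma emeasure_agreeing_digits_le:
  fixes free :: "nat \<Rightarrow> bool"
  assumes count: "\<And>P. s * real P \<le> real (card {j. j < P \<and> free j}) + K0"
    and s: "0 < s" and D: "0 \<le> D"
  shows "ennreal (rho powr K0) *
      emeasure digit_space {w. \<forall>j. free j \<and> D < rho ^ j \<longrightarrow> to_digit (w j) = to_digit (w0 j)}
      \<le> ennreal (D powr s)"
proof -
  define Z where "Z = {w. \<forall>j. free j \<and> D < rho ^ j \<longrightarrow> to_digit (w j) = to_digit (w0 j)}"
  have bound: "ennreal (rho powr K0) * emeasure digit_space Z \<le> ennreal ((rho ^ P) powr s)"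
    if "\<And>j. j < P \<Longrightarrow> D < rho ^ j" for P
    unfolding Z_def using count that by (rule emeasure_agreeing_digits_le_power)
  show ?thesis
  proof (cases "D > 0")
    case True
    have ex: "\<exists>P. rho ^ P \<le> D"
      using real_arch_pow_inv[OF True rho_less_1] by (auto intro: less_imp_le)
    define P where "P = (LEAST P. rho ^ P \<le> D)"
    have "rho ^ P \<le> D" unfolding P_def by (rule LeastI_ex[OF ex])
    then have "(rho ^ P) powr s \<le> D powr s" using s rho_gt_0 by (intro powr_mono2) auto
    have "D < rho ^ j" if "j < P" for j using not_less_Least[OF that[unfolded P_def]] by simp
    then have "ennreal (rho powr K0) * emeasure digit_space Z \<le> ennreal ((rho ^ P) powr s)"
      by (rule bound)
    also have "\<dots> \<le> ennreal (D powr s)" using \<open>(rho ^ P) powr s \<le> D powr s\<close> by (rule ennreal_leI)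
    finally show ?thesis by (simp add: Z_def)
  next
    case False
    then have "D = 0" using D by simp
    have "rho powr s < 1" using powr_less_mono2[of s rho 1] rho_gt_0 rho_less_1 s by simp
    then have "(\<lambda>P. ennreal ((rho powr s) ^ P)) \<longlonglongrightarrow> ennreal 0"
      using rho_gt_0 by (intro tendsto_ennrealI LIMSEQ_power_zero) auto
    moreover have "ennreal (rho powr K0) * emeasure digit_space Z
        \<le> ennreal ((rho powr s) ^ P)" for P
    proof -
      have "\<And>j. j < P \<Longrightarrow> D < rho ^ j" using \<open>D = 0\<close> rho_gt_0 by simp
      from bound[OF this] show ?thesis using powr_power_swap[OF rho_gt_0] by simp
    qed
    ultimately have "ennreal (rho powr K0) * emeasure digit_space Z \<le> ennreal 0"
      by (intro tendsto_le[OF trivial_limit_sequentially _ tendsto_const]) auto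
    then show ?thesis using \<open>D = 0\<close> by (simp add: Z_def)
  qed
qed

lemma mass_le_cover_sum:
  fixes Phi :: "(nat \<Rightarrow> 'a) \<Rightarrow> 'a" and free :: "nat \<Rightarrow> bool"
  assumes sep: "\<And>w w' j. free j \<Longrightarrow> v (Phi w - Phi w') < rho ^ j \<Longrightarrow> to_digit (w j) = to_digit (w' j)"
    and count: "\<And>P. s * real P \<le> real (card {j. j < P \<and> free j}) + K0"
    and s: "0 < s"
    and cover: "range Phi \<subseteq> (\<Union>i. U i)" and diam: "\<And>i. p_diam v (U i) \<le> ennreal d"
  shows "ennreal (rho powr K0) \<le> (\<Sum>i. if U i = {} then 0 else if s = 0 then 1
            else ennreal (enn2real (p_diam v (U i)) powr s))"
proof -
  define D where "D i = enn2real (p_diam v (U i))" for i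
  define w0 where "w0 i = (SOME w. Phi w \<in> U i)" for i
  define Z where "Z i = (if \<exists>w. Phi w \<in> U i
    then {w. \<forall>j. free j \<and> D i < rho ^ j \<longrightarrow> to_digit (w j) = to_digit (w0 i j)} else {})" for i
  have Z_sets: "Z i \<in> sets digit_space" for i
    using digit_cylinder_sets[of "{j. free j \<and> D i < rho ^ j}" "\<lambda>j. {a. to_digit a
        = to_digit (w0 i j)}"]
    by (simp add: Z_def)
  have "w \<in> (\<Union>i. Z i)" for w
  proof -
    obtain i where i: "Phi w \<in> U i" using cover by blast
    then have w0: "Phi (w0 i) \<in> U i" unfolding w0_def by (rule someI[of "\<lambda>w. Phi w \<in> U i"])
    have "v (Phi w - Phi (w0 i)) \<le> D i" unfolding D_def using i w0 diam by (rule v_le_p_diam)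
    then have "w \<in> Z i" using i sep by (fastforce simp: Z_def)
    then show ?thesis by blast
  qed
  then have "(\<Union>i. Z i) = space digit_space" by auto
  then have "1 \<le> emeasure digit_space (\<Union>i. Z i)"
    using prob_space.emeasure_space_1[OF prob_space_digit_space] by simp
  also have "\<dots> \<le> (\<Sum>i. emeasure digit_space (Z i))"
    using Z_sets by (intro emeasure_subadditive_countably) auto
  finally have "ennreal (rho powr K0) \<le> (\<Sum>i. ennreal (rho powr K0) * emeasure digit_space (Z i))"
    using mult_left_mono[of 1 _ "ennreal (rho powr K0)"] by simp
  also have "\<dots> \<le> (\<Sum>i. if U i = {} then 0 else if s = 0 then 1
          else ennreal (enn2real (p_diam v (U i)) powr s))"
  proof (intro suminf_le allI)
    fix i
    show "ennreal (rho powr K0) * emeasure digit_space (Z i)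
        \<le> (if U i = {} then 0 else if s = 0 then 1
          else ennreal (enn2real (p_diam v (U i)) powr s))"
      using emeasure_agreeing_digits_le[OF count s, of "D i" "w0 i"] s
      by (auto simp: Z_def D_def)
  qed auto
  finally show ?thesis .
qed

lemma hmeasure_pos_mass_distribution:
  fixes Phi :: "(nat \<Rightarrow> 'a) \<Rightarrow> 'a" and free :: "nat \<Rightarrow> bool"
  assumes img: "range Phi \<subseteq> E"
    and sep: "\<And>w w' j. free j \<Longrightarrow> v (Phi w - Phi w') < rho ^ j \<Longrightarrow> to_digit (w j) = to_digit (w' j)"
    and count: "\<And>P. s * real P \<le> real (card {j. j < P \<and> free j}) + K0"
    and s: "0 < s"
  shows "0 < hmeasure v s E"
proof -
  have "ennreal (rho powr K0) \<le> hcontent v s 1 E"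
    unfolding hcontent_def
  proof (rule INF_greatest)
    fix U :: "nat \<Rightarrow> 'a set" assume U: "U \<in> {U. E \<subseteq> (\<Union>i. U i) \<and> (\<forall>i. p_diam v (U i) \<le> ennreal 1)}"
    show "ennreal (rho powr K0) \<le> (\<Sum>i. if U i = {} then 0 else if s = 0 then 1
        else ennreal (enn2real (p_diam v (U i)) powr s))"
      by (rule mass_le_cover_sum[where Phi = Phi and free = free and d
          = 1]) (use sep count s U img in auto)
  qed
  also have "\<dots> \<le> hmeasure v s E" unfolding hmeasure_def by (rule SUP_upper) simp
  finally have "ennreal (rho powr K0) \<le> hmeasure v s E" .
  moreover have "0 < ennreal (rho powr K0)" using prm_nonzero by simp
  ultimately show ?thesis by (rule less_le_trans[rotated])
qed

end

section \<open>A Cantor set inside the target set\<close>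

lemma newton_error_bound:
  fixes a G Q eps t :: real
  assumes a: "a > 0" and G: "G > 0" and Q: "Q > 0" and eps: "eps \<ge> 0"
    and step: "eps * (a * G * Q ^ (r - 1)) \<le> 1"
    and remainder: "t * Q ^ 2 \<le> a * eps ^ 2 * Q ^ r" and r: "r \<ge> 1"
  shows "t \<le> 1 / (a * G ^ 2 * Q ^ r)"
proof -
  define P where "P = Q ^ (r - 1)"
  have P: "P > 0" using Q by (simp add: P_def)
  have Qr: "Q ^ r = P * Q" unfolding P_def using r by (metis Suc_diff_le diff_Suc_1 power_Suc2)
  have "t * Q * Q \<le> a * eps ^ 2 * P * Q" using remainder Qr by (simp add: power2_eq_square mult.assoc)
  then have tQ: "t * Q \<le> a * eps ^ 2 * P" using Q by (simp add: mult_le_cancel_right)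
  have "(eps * (a * G * P)) ^ 2 \<le> 1" using step eps a G P by (simp add: P_def power_le_one)
  then have e2: "eps ^ 2 * (a * G * P) ^ 2 \<le> 1" by (simp add: power_mult_distrib)
  have "t * Q * (a * G ^ 2 * P) \<le> a * eps ^ 2 * P * (a * G ^ 2 * P)"
    using tQ a G P by (intro mult_right_mono) auto
  also have "\<dots> = eps ^ 2 * (a * G * P) ^ 2" by (simp add: power2_eq_square algebra_simps)
  finally have "t * (a * G ^ 2 * (P * Q)) \<le> 1" using e2 by (simp add: algebra_simps)
  then show ?thesis using a G P Q Qr by (simp add: field_simps)
qed

locale digit_construction = local_field_struct v prm C for v prm C +
  fixes alpha z :: 'a and r :: "nat \<Rightarrow> nat" and b :: "nat \<Rightarrow> 'a"
    and m g n0 A0 R :: nat and l :: "nat \<Rightarrow> nat" and gam :: real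
  assumes alpha_nonzero: "alpha \<noteq> 0"
    and v_z: "v z = inverse rho ^ m" and m_pos: "m \<ge> 1"
    and gam_pos: "gam > 0" and v_r_ge: "\<And>n. gam \<le> v (of_nat (r n))"
    and rho_g_le: "rho ^ g \<le> v alpha * gam"
    and r_pos: "\<And>n. 0 < r n" and r_strict_mono: "strict_mono r"
    and v_b_le: "\<And>n. v (b n) \<le> 1"
    and A0_le: "A0 + g \<le> m * (r n0 - 1)"
    and l_gap: "\<And>n. n0 < n \<Longrightarrow> R * (l n + g) + g + l (n - 1) \<le> m * (r n - r (n - 1))"
    and l_tendsto: "filterlim l at_top sequentially"
begin

abbreviation Q :: real where "Q \<equiv> v z"

lemma Q_gt_1: "1 < Q"
  using rho_gt_0 rho_less_1 m_pos by (simp add: v_z one_less_inverse one_less_power)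

lemma Q_power: "Q ^ k = inverse (rho ^ (m * k))"
  by (simp add: v_z power_mult power_inverse)

lemma r_mono: "n \<le> n' \<Longrightarrow> r n \<le> r n'"
  using r_strict_mono by (simp add: strict_mono_less_eq)

lemma A0_g_le: "A0 + g \<le> m * (r (n0 + k) - 1)"
  using A0_le r_mono[of n0 "n0 + k"] mult_le_mono2[of "r n0 - 1" "r (n0 + k) - 1" m] by linarith

text \<open>A digit sequence w codes a point whose digits at the free positions [A k, B k) are
  those of w. After block k, with n = n0 + k, a Newton step makes [alpha x ^ r n] equal to b n;
  since the derivative alpha * r n * x ^ (r n - 1) has absolute value at least
  rho ^ g * Q ^ (r n - 1) = rho ^ g / rho ^ (m * (r n - 1)), the step is at most rho ^ B k.
  The digits placed from A (Suc k) = m * (r n - 1) + l n on move alpha x ^ r n by at most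
  v alpha * rho ^ l n.\<close>

definition B :: "nat \<Rightarrow> nat" where
  "B k = m * (r (n0 + k) - 1) - g"

definition A :: "nat \<Rightarrow> nat" where
  "A k = (case k of 0 \<Rightarrow> A0 | Suc j \<Rightarrow> m * (r (n0 + j) - 1) + l (n0 + j))"

lemma A_0 [simp]: "A 0 = A0" and A_Suc [simp]: "A (Suc j) = m * (r (n0 + j) - 1) + l (n0 + j)"
  by (simp_all add: A_def)

lemma B_Suc_ge: "B k + 1 \<le> B (Suc k)"
proof -
  have "r (n0 + k) < r (n0 + Suc k)" using r_strict_mono by (simp add: strict_mono_def)
  then have "m * (r (n0 + k) - 1 + 1) \<le> m * (r (n0 + Suc k) - 1)"
    using r_pos[of "n0 + k"] by (intro mult_le_mono2) linarith
  then show ?thesis using A0_g_le[of k] m_pos by (simp add: B_def algebra_simps)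
qed

lemma B_unbounded: "k \<le> B k"
  by (induction k) (use B_Suc_ge in \<open>auto intro: le_trans\<close>)

lemma A_le_B: "A k \<le> B k"
proof (cases k)
  case 0
  then show ?thesis using A0_g_le[of 0] by (simp add: B_def)
next
  case (Suc j)
  define n where "n = n0 + j"
  have "l n + g \<le> m * (r (Suc n) - r n)" using l_gap[of "Suc n"] by (simp add: n_def)
  moreover have "m * (r (Suc n) - r n) = m * (r (Suc n) - 1) - m * (r n - 1)"
    using r_mono[of n "Suc n"] r_pos[of n] by (simp add: diff_mult_distrib2[symmetric])
  moreover have "m * (r n - 1) \<le> m * (r (Suc n) - 1)"
    using r_mono[of n "Suc n"] by (intro mult_le_mono2) simp
  moreover have "A k = m * (r n - 1) + l n" "B k = m * (r (Suc n) - 1) - g"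
    using Suc by (simp_all add: B_def n_def)
  ultimately show ?thesis by arith
qed

lemma B_le_A_Suc: "B k \<le> A (Suc k)"
  by (simp add: B_def)

lemma gap_le_block: assumes "k \<ge> 1" shows "R * (A (Suc k) - B k) \<le> B k - A k"
proof -
  obtain j where k: "k = Suc j" using assms by (cases k) auto
  define n where "n = n0 + k"
  have "R * (l n + g) + g + l (n - 1) \<le> m * (r n - r (n - 1))"
    using l_gap[of n] by (simp add: n_def k)
  moreover have "m * (r n - r (n - 1)) = m * (r n - 1) - m * (r (n - 1) - 1)"
    using r_mono[of "n - 1" n] r_pos[of "n - 1"] by (simp add: diff_mult_distrib2[symmetric])
  moreover have "m * (r (n - 1) - 1) \<le> m * (r n - 1)"
    using r_mono[of "n - 1" n] by (intro mult_le_mono2) simp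
  moreover have "g \<le> m * (r n - 1)" using A0_g_le[of k] by (simp add: n_def)
  ultimately show ?thesis by (simp add: B_def n_def k) arith
qed

sublocale blocks: block_sequence A B R
  using A_le_B B_le_A_Suc gap_le_block B_unbounded by unfold_locales

lemma A0_le_B: "A0 \<le> B k"
  using A0_g_le[of k] by (simp add: B_def)

lemma A0_le_A: "A0 \<le> A k"
  using blocks.A_mono[of 0 k] by simp

definition free_digits :: "(nat \<Rightarrow> 'a) \<Rightarrow> nat \<Rightarrow> 'a" where
  "free_digits w k = (\<Sum>i\<in>{A k..<B k}. to_digit (w i) * prm ^ i)"

definition newton_step :: "nat \<Rightarrow> 'a \<Rightarrow> 'a" where
  "newton_step n x =
    (b n - int_part v prm C (alpha * x ^ r n)) / (alpha * of_nat (r n) * x ^ (r n - 1))"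

primrec approx :: "(nat \<Rightarrow> 'a) \<Rightarrow> nat \<Rightarrow> 'a" where
  "approx w 0 = z + free_digits w 0"
| "approx w (Suc k) = approx w k + newton_step (n0 + k) (approx w k) + free_digits w (Suc k)"

definition point :: "(nat \<Rightarrow> 'a) \<Rightarrow> 'a" where
  "point w = (SOME L. p_tendsto v (approx w) L)"

lemma v_free_digits_le: "v (free_digits w k) \<le> rho ^ A k"
  unfolding free_digits_def
proof (rule v_sum_le)
  fix i assume "i \<in> {A k..<B k}"
  then have "v (to_digit (w i)) * rho ^ i \<le> 1 * rho ^ A k"
    using v_C_le_1[OF to_digit_in_C] rho_power_antimono[of "A k" i] by (intro mult_mono) auto
  then show "v (to_digit (w i) * prm ^ i) \<le> rho ^ A k" by (simp add: v_mult v_prm_power)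
qed (simp add: less_imp_le rho_gt_0)

lemma v_newton_step_le:
  assumes "v x = Q" "n \<ge> n0"
  shows "v (newton_step n x) \<le> rho ^ (m * (r n - 1) - g)"
proof -
  have num: "v (b n - int_part v prm C (alpha * x ^ r n)) \<le> 1"
    using v_b_le v_int_part_le_1 by (rule v_diff_le)
  have "rho ^ g * Q ^ (r n - 1) \<le> v alpha * gam * Q ^ (r n - 1)"
    using rho_g_le Q_gt_1 by (intro mult_right_mono) auto
  also have "\<dots> \<le> v alpha * v (of_nat (r n)) * Q ^ (r n - 1)"
    using v_r_ge[of n] v_pos[OF alpha_nonzero] Q_gt_1 by (intro mult_right_mono mult_left_mono) auto
  also have "\<dots> = v (alpha * of_nat (r n) * x ^ (r n - 1))"
    using assms by (simp add: v_mult v_power)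
  finally have den: "rho ^ g * Q ^ (r n - 1) \<le> v (alpha * of_nat (r n) * x ^ (r n - 1))" .
  have "rho ^ g * Q ^ (r n - 1) > 0" using rho_gt_0 Q_gt_1 by simp
  then have "v (newton_step n x) \<le> 1 / (rho ^ g * Q ^ (r n - 1))"
    unfolding newton_step_def v_divide using num den
    by (meson divide_le_cancel frac_le less_le_trans zero_le_one order.strict_implies_order)
  also have "\<dots> = rho ^ (m * (r n - 1)) / rho ^ g" using rho_gt_0 by (simp add: Q_power field_simps)
  also have "\<dots> = rho ^ (m * (r n - 1) - g)"
    using A0_g_le[of "n - n0"] assms(2) prm_nonzero by (simp add: power_diff)
  finally show ?thesis .
qed

lemma v_eq_Q_if_near_z: assumes "v (y - z) \<le> rho ^ A0" shows "v y = Q"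
proof -
  have "v (y - z) < v z" using assms rho_power_le_1[of A0] Q_gt_1 by linarith
  then have "v (z + (y - z)) = v z" by (rule v_add_eq_left)
  then show ?thesis by simp
qed

lemma approx_near_z: "v (approx w k - z) \<le> rho ^ A0"
proof (induction k)
  case 0
  show ?case using v_free_digits_le[of w 0] by simp
next
  case (Suc k)
  have "v (approx w k) = Q" using Suc by (rule v_eq_Q_if_near_z)
  then have "v (newton_step (n0 + k) (approx w k)) \<le> rho ^ B k"
    using v_newton_step_le by (simp add: B_def)
  then have "v (newton_step (n0 + k) (approx w k)) \<le> rho ^ A0"
    using rho_power_antimono[OF A0_le_B[of k]] by linarith
  moreover have "v (free_digits w (Suc k)) \<le> rho ^ A0"
    using v_free_digits_le[of w "Suc k"] rho_power_antimono[OF A0_le_A[of "Suc k"]] by linarith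
  moreover have "approx w (Suc k) - z =
      (approx w k - z) + newton_step (n0 + k) (approx w k) + free_digits w (Suc k)"
    by simp
  ultimately show ?case using Suc by (metis v_add_le)
qed

lemma v_approx: "v (approx w k) = Q"
  using approx_near_z by (rule v_eq_Q_if_near_z)

lemma v_approx_Suc_diff_le: "v (approx w (Suc k) - approx w k) \<le> rho ^ B k"
proof -
  have "v (newton_step (n0 + k) (approx w k)) \<le> rho ^ B k"
    using v_newton_step_le[OF v_approx] by (simp add: B_def)
  moreover have "v (free_digits w (Suc k)) \<le> rho ^ B k"
    using v_free_digits_le[of w "Suc k"] rho_power_antimono[OF B_le_A_Suc[of k]] by linarith
  ultimately show ?thesis by (simp add: v_add_le)
qed

lemma v_approx_diff_le: "k \<le> j \<Longrightarrow> v (approx w j - approx w k) \<le> rho ^ B k"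
proof (induction j rule: dec_induct)
  case (step j)
  have "v (approx w (Suc j) - approx w j) \<le> rho ^ B k"
    using v_approx_Suc_diff_le[of w j] rho_power_antimono[OF blocks.B_mono[OF step(1)]] by linarith
  then show ?case using step v_triangle[of "approx w (Suc j)" "approx w k" "approx w j"] by simp
qed (simp add: less_imp_le rho_gt_0)

lemma approx_tendsto: "p_tendsto v (approx w) (point w)"
proof -
  have "\<exists>L. p_tendsto v (approx w) L"
  proof (rule p_Cauchy_converges)
    fix e :: real assume "e > 0"
    then obtain N where N: "rho ^ N < e" using real_arch_pow_inv[OF _ rho_less_1] by blast
    have "v (approx w i - approx w j) < e" if "N \<le> i" "N \<le> j" for i j
    proof -
      have "v (approx w i - approx w j) \<le>
          max (v (approx w i - approx w N)) (v (approx w N - approx w j))"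
        by (rule v_triangle)
      also have "\<dots> \<le> rho ^ B N"
        using v_approx_diff_le[OF that(1)] v_approx_diff_le[OF that(2)] v_commute[of "approx w N"]
          by simp
      also have "\<dots> \<le> rho ^ N" using B_unbounded[of N] by (rule rho_power_antimono)
      finally show ?thesis using N by simp
    qed
    then show "\<exists>N. \<forall>i\<ge>N. \<forall>j\<ge>N. v (approx w i - approx w j) < e" by blast
  qed
  then show ?thesis unfolding point_def by (rule someI_ex)
qed

lemma v_point_approx_le: "v (point w - approx w k) \<le> rho ^ B k"
  using p_tendsto_dist_le[OF approx_tendsto] v_approx_diff_le
  by (simp add: eventually_sequentially) blast

lemma point_near_z: "v (point w - z) \<le> rho ^ A0"
proof -
  have "v (point w - approx w 0) \<le> rho ^ A0"
    using v_point_approx_le[of w 0] rho_power_antimono[OF A0_le_B[of 0]] by linarith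
  then show ?thesis using v_triangle[of "point w" z "approx w 0"] approx_near_z[of w 0] by simp
qed

lemma v_point: "v (point w) = Q"
  using point_near_z by (rule v_eq_Q_if_near_z)

lemma v_newton_step_approx_le: "v (newton_step (n0 + k) (approx w k)) \<le> rho ^ B k"
  using v_newton_step_le[OF v_approx] by (simp add: B_def)

lemma newton_step_error:
  assumes x: "v x = Q" and n: "n \<ge> n0" and small: "1 / (v alpha * gam ^ 2 * Q ^ r n) \<le> 1"
  shows "v (int_part v prm C (alpha * (x + newton_step n x) ^ r n) - b n)
      \<le> 1 / (v alpha * gam ^ 2 * Q ^ r n)"
proof -
  define eps where "eps = newton_step n x"
  define D where "D = b n - int_part v prm C (alpha * x ^ r n)"
  define t where "t = alpha * ((x + eps) ^ r n - x ^ r n - of_nat (r n) * x ^ (r n - 1) * eps)"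
  have r1: "r n \<ge> 1" using r_pos[of n] by simp
  have "x \<noteq> 0" using x Q_gt_1 by auto
  have va: "v alpha > 0" using v_pos[OF alpha_nonzero] .
  have vD: "v D \<le> 1" unfolding D_def using v_b_le v_int_part_le_1 by (rule v_diff_le)
  have "v eps \<le> rho ^ (m * (r n - 1) - g)" unfolding eps_def using x n by (rule v_newton_step_le)
  then have veQ: "v eps \<le> Q" using rho_power_le_1 Q_gt_1 by (meson less_imp_le order_trans)
  have lin: "alpha * of_nat (r n) * x ^ (r n - 1) * eps = D"
    using alpha_nonzero r1 \<open>x \<noteq> 0\<close> by (simp add: eps_def newton_step_def D_def)
  have diff: "alpha * (x + eps) ^ r n - alpha * x ^ r n = D + t"
  proof -
    have "alpha * (x + eps) ^ r n - alpha * x ^ r n =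
        t + alpha * of_nat (r n) * x ^ (r n - 1) * eps"
      by (simp add: t_def algebra_simps)
    then show ?thesis using lin by simp
  qed
  have step: "v eps * (v alpha * gam * Q ^ (r n - 1)) \<le> 1"
  proof -
    have "v eps * (v alpha * gam * Q ^ (r n - 1)) \<le>
        v eps * (v alpha * v (of_nat (r n) :: 'a) * Q ^ (r n - 1))"
      using v_r_ge[of n] va Q_gt_1 by (intro mult_left_mono mult_right_mono) auto
    also have "\<dots> = v D" using x by (simp add: lin[symmetric] v_mult v_power)
    finally show ?thesis using vD by linarith
  qed
  have "v ((x + eps) ^ r n - x ^ r n - of_nat (r n) * x ^ (r n - 1) * eps) * Q ^ 2
      \<le> v eps ^ 2 * Q ^ r n"
    using v_power_linear_remainder_le[OF _ veQ _ r1] x Q_gt_1 by simp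
  then have remainder: "v t * Q ^ 2 \<le> v alpha * v eps ^ 2 * Q ^ r n"
    using va by (simp add: t_def v_mult mult.assoc mult_left_mono)
  have vt: "v t \<le> 1 / (v alpha * gam ^ 2 * Q ^ r n)"
    using Q_gt_1 by (intro newton_error_bound[OF va gam_pos _ v_nonneg step remainder r1]) simp
  have "v (D + t) \<le> 1" using vD vt small by (intro v_add_le) auto
  then have "int_part v prm C (alpha * (x + eps) ^ r n) - int_part v prm C (alpha * x ^ r n)
      = D + t"
    unfolding diff[symmetric] by (rule int_part_diff)
  then show ?thesis using vt by (simp add: D_def eps_def algebra_simps)
qed

lemma v_point_power_diff_le:
  fixes w :: "nat \<Rightarrow> 'a" and k :: nat
  defines "y \<equiv> approx w k + newton_step (n0 + k) (approx w k)"
  shows "v (alpha * point w ^ r (n0 + k) - alpha * y ^ r (n0 + k)) \<le> v alpha * rho ^ l (n0 + k)"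
proof -
  have "point w - y = (point w - approx w (Suc k)) + free_digits w (Suc k)"
    by (simp add: y_def)
  moreover have "v (point w - approx w (Suc k)) \<le> rho ^ A (Suc k)"
    using v_point_approx_le[of w "Suc k"] rho_power_antimono[OF A_le_B[of "Suc k"]] by linarith
  ultimately have vy: "v (point w - y) \<le> rho ^ A (Suc k)"
    using v_free_digits_le[of w "Suc k"] by (metis v_add_le)
  have "v (newton_step (n0 + k) (approx w k)) \<le> rho ^ A0"
    using v_newton_step_approx_le[of k w] rho_power_antimono[OF A0_le_B[of k]] by linarith
  then have "v (y - z) \<le> rho ^ A0"
    using approx_near_z[of w k] v_add_le unfolding y_def by (metis add_diff_eq diff_add_eq)
  then have "v y = Q" by (rule v_eq_Q_if_near_z)
  then have "v (point w ^ r (n0 + k) - y ^ r (n0 + k)) * Q \<le> v (point w - y) * Q ^ r (n0 + k)"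
    using v_power_diff_le v_point by simp
  also have "\<dots> \<le> rho ^ A (Suc k) * Q ^ (r (n0 + k) - 1) * Q"
    using vy Q_gt_1 r_pos[of "n0 + k"]
    by (simp add: mult.assoc power_eq_if[of Q "r (n0 + k)"] mult_right_mono split: if_splits)
  finally have "v (point w ^ r (n0 + k) - y ^ r (n0 + k)) \<le> rho ^ A (Suc k) * Q ^ (r (n0 + k) - 1)"
    using Q_gt_1 by simp
  also have "\<dots> = rho ^ l (n0 + k)"
    using prm_nonzero by (simp add: Q_power power_add field_simps)
  finally show ?thesis
    by (simp add: right_diff_distrib[symmetric] v_mult v_pos[OF alpha_nonzero])
qed

lemma v_int_part_point_sub_le:
  assumes newton_small: "1 / (v alpha * gam ^ 2 * Q ^ r (n0 + k)) \<le> 1"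
    and tail_small: "v alpha * rho ^ l (n0 + k) \<le> 1"
  shows "v (int_part v prm C (alpha * point w ^ r (n0 + k)) - b (n0 + k))
      \<le> max (1 / (v alpha * gam ^ 2 * Q ^ r (n0 + k))) (v alpha * rho ^ l (n0 + k))"
proof -
  define y where "y = approx w k + newton_step (n0 + k) (approx w k)"
  have vy: "v (alpha * point w ^ r (n0 + k) - alpha * y ^ r (n0 + k)) \<le> v alpha * rho ^ l (n0 + k)"
    unfolding y_def by (rule v_point_power_diff_le)
  then have "int_part v prm C (alpha * point w ^ r (n0 + k)) -
      int_part v prm C (alpha * y ^ r (n0 + k)) = alpha * point w ^ r (n0 + k) - alpha * y ^ r (n0 + k)"
    using tail_small by (intro int_part_diff) simp
  then have "int_part v prm C (alpha * point w ^ r (n0 + k)) - b (n0 + k) =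
      (alpha * point w ^ r (n0 + k) - alpha * y ^ r (n0 + k)) +
      (int_part v prm C (alpha * y ^ r (n0 + k)) - b (n0 + k))"
    by (simp add: algebra_simps)
  moreover have "v (int_part v prm C (alpha * y ^ r (n0 + k)) - b (n0 + k))
      \<le> 1 / (v alpha * gam ^ 2 * Q ^ r (n0 + k))"
    unfolding y_def by (rule newton_step_error[OF v_approx _ newton_small]) simp
  ultimately show ?thesis using vy v_ultrametric by (smt (verit, ccfv_threshold))
qed

lemma int_part_point_tendsto: "p_tendsto v (\<lambda>n. int_part v prm C (alpha * point w ^ r n) - b n) 0"
proof -
  define T1 where "T1 n = 1 / (v alpha * gam ^ 2 * Q ^ r n)" for n
  define T2 where "T2 n = v alpha * rho ^ l n" for n
  have va: "v alpha > 0" using v_pos[OF alpha_nonzero] .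
  have T1_le: "T1 n \<le> (1 / (v alpha * gam ^ 2)) * inverse Q ^ n" for n
  proof -
    have "inverse Q ^ r n \<le> inverse Q ^ n"
      using strict_mono_imp_increasing[OF r_strict_mono, of n] Q_gt_1
      by (intro power_decreasing) (auto simp: inverse_le_1_iff)
    then show ?thesis using va gam_pos
      by (simp add: T1_def power_inverse divide_inverse mult_left_mono)
  qed
  have T1_lim: "T1 \<longlonglongrightarrow> 0"
  proof (rule tendsto_sandwich[of "\<lambda>_. 0" _ _ "\<lambda>n. (1 / (v alpha * gam ^ 2)) * inverse Q ^ n"])
    show "\<forall>\<^sub>F n in sequentially. 0 \<le> T1 n" using va gam_pos Q_gt_1 by (simp add: T1_def)
    show "\<forall>\<^sub>F n in sequentially. T1 n \<le> 1 / (v alpha * gam ^ 2) * inverse Q ^ n" using T1_le by simp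
    show "(\<lambda>n. 1 / (v alpha * gam ^ 2) * inverse Q ^ n) \<longlonglongrightarrow> 0"
      using Q_gt_1
        by (intro tendsto_mult_right_zero LIMSEQ_power_zero) (simp add: inverse_less_1_iff)
  qed simp
  have "(\<lambda>j. rho ^ j) \<longlonglongrightarrow> 0" using rho_gt_0 rho_less_1 by (intro LIMSEQ_power_zero) auto
  then have "(\<lambda>n. rho ^ l n) \<longlonglongrightarrow> 0" using filterlim_compose l_tendsto by blast
  then have T2_lim: "T2 \<longlonglongrightarrow> 0" unfolding T2_def by (rule tendsto_mult_right_zero)
  have ev1: "\<forall>\<^sub>F n in sequentially. T1 n \<le> 1"
    using order_tendstoD(2)[OF T1_lim, of 1] by (auto elim: eventually_mono)
  have ev2: "\<forall>\<^sub>F n in sequentially. T2 n \<le> 1"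
    using order_tendstoD(2)[OF T2_lim, of 1] by (auto elim: eventually_mono)
  have ev: "\<forall>\<^sub>F n in sequentially.
      v (int_part v prm C (alpha * point w ^ r n) - b n - 0) \<le> max (T1 n) (T2 n)"
    using ev1 ev2 eventually_ge_at_top[of n0]
  proof eventually_elim
    case (elim n)
    then show ?case using v_int_part_point_sub_le[of "n - n0" w] by (simp add: T1_def T2_def)
  qed
  have max_lim: "(\<lambda>n. max (T1 n) (T2 n)) \<longlonglongrightarrow> 0" using tendsto_max[OF T1_lim T2_lim] by simp
  show ?thesis unfolding p_tendsto_def
    by (rule tendsto_sandwich[OF _ ev tendsto_const max_lim]) simp
qed

lemma free_digits_cong:
  assumes "\<And>i. A k \<le> i \<Longrightarrow> i < B k \<Longrightarrow> to_digit (w i) = to_digit (w' i)"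
  shows "free_digits w k = free_digits w' k"
  unfolding free_digits_def using assms by (intro sum.cong) auto

lemma approx_cong:
  assumes "\<And>i. blocks.free i \<Longrightarrow> i < B k \<Longrightarrow> to_digit (w i) = to_digit (w' i)"
  shows "approx w k = approx w' k"
  using assms
proof (induction k)
  case 0
  have "free_digits w 0 = free_digits w' 0"
  proof (rule free_digits_cong)
    fix i assume "A 0 \<le> i" "i < B 0"
    then show "to_digit (w i) = to_digit (w' i)" using 0 unfolding blocks.free_def by blast
  qed
  then show ?case by simp
next
  case (Suc k)
  have "approx w k = approx w' k"
    using Suc.prems blocks.B_mono[of k "Suc k"] by (intro Suc.IH) auto
  moreover have "free_digits w (Suc k) = free_digits w' (Suc k)"
  proof (rule free_digits_cong)
    fix i assume "A (Suc k) \<le> i" "i < B (Suc k)"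
    then show "to_digit (w i) = to_digit (w' i)" using Suc.prems unfolding blocks.free_def by blast
  qed
  ultimately show ?case by simp
qed

lemma free_digits_diff_eq:
  assumes "A k \<le> i0" "i0 < B k"
    and agree: "\<And>i. A k \<le> i \<Longrightarrow> i < i0 \<Longrightarrow> to_digit (w i) = to_digit (w' i)"
  shows "free_digits w k - free_digits w' k = (to_digit (w i0) - to_digit (w' i0)) * prm ^ i0 +
      (\<Sum>i\<in>{i0<..<B k}. (to_digit (w i) - to_digit (w' i)) * prm ^ i)"
proof -
  define f where "f i = (to_digit (w i) - to_digit (w' i)) * prm ^ i" for i
  have "free_digits w k - free_digits w' k = (\<Sum>i\<in>{A k..<B k}. f i)"
    by (simp add: free_digits_def f_def sum_subtractf algebra_simps)
  also have "{A k..<B k} = {A k..<i0} \<union> ({i0} \<union> {i0<..<B k})" using assms(1,2) by auto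
  finally have "free_digits w k - free_digits w' k =
      (\<Sum>i\<in>{A k..<i0}. f i) + (f i0 + (\<Sum>i\<in>{i0<..<B k}. f i))"
    by (subst (asm) sum.union_disjoint) (auto simp: sum.union_disjoint)
  moreover have "(\<Sum>i\<in>{A k..<i0}. f i) = 0" using agree by (intro sum.neutral) (simp add: f_def)
  ultimately show ?thesis by (simp add: f_def)
qed

lemma v_digit_diff_sum_le:
  "v (\<Sum>i\<in>{i0<..<N}. (to_digit (w i) - to_digit (w' i)) * prm ^ i) \<le> rho ^ Suc i0"
proof (rule v_sum_le)
  fix i assume "i \<in> {i0<..<N}"
  then have "v (to_digit (w i) - to_digit (w' i)) * rho ^ i \<le> 1 * rho ^ Suc i0"
    using v_C_le_1[OF to_digit_in_C] rho_power_antimono[of "Suc i0" i]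
    by (intro mult_mono v_diff_le) auto
  then show "v ((to_digit (w i) - to_digit (w' i)) * prm ^ i) \<le> rho ^ Suc i0"
    by (simp add: v_mult v_prm_power)
qed (simp add: less_imp_le rho_gt_0)

text \<open>Up to the block containing i0 both points run through the same Newton steps, and
  everything placed after position i0 is smaller than rho ^ i0.\<close>

lemma v_point_diff_eq:
  assumes free: "blocks.free i0"
    and agree: "\<And>i. i < i0 \<Longrightarrow> blocks.free i \<Longrightarrow> to_digit (w i) = to_digit (w' i)"
    and differ: "to_digit (w i0) \<noteq> to_digit (w' i0)"
  shows "v (point w - point w') = rho ^ i0"
proof -
  obtain k0 where k0: "A k0 \<le> i0" "i0 < B k0" using free by (auto simp: blocks.free_def)
  have approx_diff: "approx w k0 - approx w' k0 = free_digits w k0 - free_digits w' k0"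
  proof (cases k0)
    case (Suc k)
    have "approx w k = approx w' k"
    proof (rule approx_cong)
      fix i assume "blocks.free i" "i < B k"
      moreover have "B k \<le> A k0" using B_le_A_Suc[of k] Suc by simp
      ultimately have "i < i0" using k0(1) by linarith
      then show "to_digit (w i) = to_digit (w' i)" using agree \<open>blocks.free i\<close> by blast
    qed
    then show ?thesis using Suc by simp
  qed simp
  define d where "d = (to_digit (w i0) - to_digit (w' i0)) * prm ^ i0"
  have "v d = rho ^ i0"
    using v_C_diff[OF to_digit_in_C to_digit_in_C differ] by (simp add: d_def v_mult v_prm_power)
  have "rho ^ B k0 \<le> rho ^ Suc i0" using k0(2) by (intro rho_power_antimono) simp
  then have tail: "v (point u - approx u k0) \<le> rho ^ Suc i0" for u
    using v_point_approx_le[of u k0] by linarith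
  define E where "E = (\<Sum>i\<in>{i0<..<B k0}. (to_digit (w i) - to_digit (w' i)) * prm ^ i) +
      ((point w - approx w k0) - (point w' - approx w' k0))"
  have "v E \<le> rho ^ Suc i0"
    unfolding E_def by (rule v_add_le[OF v_digit_diff_sum_le v_diff_le[OF tail tail]])
  moreover have "rho ^ Suc i0 < rho ^ i0" using rho_gt_0 rho_less_1 by simp
  moreover have "free_digits w k0 - free_digits w' k0 = d +
      (\<Sum>i\<in>{i0<..<B k0}. (to_digit (w i) - to_digit (w' i)) * prm ^ i)"
    unfolding d_def
  proof (rule free_digits_diff_eq[OF k0])
    fix i assume "A k0 \<le> i" "i < i0"
    then have "blocks.free i" unfolding blocks.free_def using k0(2) by (intro exI[of _ k0]) simp
    then show "to_digit (w i) = to_digit (w' i)" using agree \<open>i < i0\<close> by blast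
  qed
  then have "point w - point w' = d + E" using approx_diff by (simp add: E_def algebra_simps)
  ultimately show ?thesis using \<open>v d = rho ^ i0\<close> v_add_eq_left[of E d] by simp
qed

lemma to_digit_eq_if_point_close:
  assumes "blocks.free j" "v (point w - point w') < rho ^ j"
  shows "to_digit (w j) = to_digit (w' j)"
proof (rule ccontr)
  assume "to_digit (w j) \<noteq> to_digit (w' j)"
  define P where "P i \<longleftrightarrow> blocks.free i \<and> to_digit (w i) \<noteq> to_digit (w' i)" for i
  have "P j" using assms(1) \<open>to_digit (w j) \<noteq> to_digit (w' j)\<close> by (simp add: P_def)
  define i0 where "i0 = (LEAST i. P i)"
  have "P i0" unfolding i0_def by (rule LeastI[of P j, OF \<open>P j\<close>])
  moreover have "\<And>i. i < i0 \<Longrightarrow> blocks.free i \<Longrightarrow> to_digit (w i) = to_digit (w' i)"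
    using not_less_Least[of _ P] unfolding i0_def P_def by blast
  ultimately have "v (point w - point w') = rho ^ i0" using v_point_diff_eq by (simp add: P_def)
  moreover have "rho ^ j \<le> rho ^ i0" using Least_le[of P j, OF \<open>P j\<close>] rho_power_antimono i0_def
    by simp
  ultimately show False using assms(2) by linarith
qed

lemma hmeasure_target_pos:
  assumes "rho ^ A0 \<le> delta" and s: "0 < s" "s * (real R + 1) \<le> real R"
  shows "0 < hmeasure v s {x. v (x - z) \<le> delta \<and> 1 < v x \<and>
            p_tendsto v (\<lambda>n. int_part v prm C (alpha * x ^ r n) - b n) 0}"
proof (rule hmeasure_pos_mass_distribution[where Phi = point and free = blocks.free])
  show "range point \<subseteq> {x. v (x - z) \<le> delta \<and> 1 < v x \<and>
      p_tendsto v (\<lambda>n. int_part v prm C (alpha * x ^ r n) - b n) 0}"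
    using point_near_z assms(1) v_point Q_gt_1 int_part_point_tendsto by (auto intro: order_trans)
  show "to_digit (w j) = to_digit (w' j)"
    if "blocks.free j" "v (point w - point w') < rho ^ j" for w w' j
    using that by (rule to_digit_eq_if_point_close)
  show "s * real P \<le> real (card {j. j < P \<and> blocks.free j}) + real blocks.K0" for P
  proof -
    have "real R * real P \<le> (real R + 1) * real (blocks.free_count 0 P) + real R * real blocks.K0"
      using blocks.free_count_lower_bound[of P]
        by (metis (mono_tags) of_nat_add of_nat_le_iff of_nat_mult of_nat_1)
    moreover have "s * real P * (real R + 1) \<le> real R * real P"
      using s(2) by (metis mult.commute mult.left_commute mult_right_mono of_nat_0_le_iff)
    ultimately have "s * real P * (real R + 1)
        \<le> (real (blocks.free_count 0 P) + real blocks.K0) * (real R + 1)"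
      by (simp add: algebra_simps)
    then have "s * real P \<le> real (blocks.free_count 0 P) + real blocks.K0"
      by (rule mult_right_le_imp_le) simp
    then show ?thesis by (simp add: blocks.free_count_def)
  qed
qed (rule s(1))

end

context local_field_struct
begin

lemma hmeasure_target_pos_lt_1:
  fixes p K :: nat and alpha z :: 'a and delta s :: real and r :: "nat \<Rightarrow> nat" and b :: "nat \<Rightarrow> 'a"
  assumes p: "prime p" "v (of_nat p) < 1" and alpha: "alpha \<noteq> 0" and K: "K > 0"
    and z: "v z > 1" and delta: "delta > 0"
    and r: "strict_mono r" "\<forall>n. r n > 0"
    and gaps: "filterlim (\<lambda>n. real (r (Suc n)) - real (r n)) at_top sequentially"
    and not_dvd: "\<forall>n. \<not> p ^ K dvd r n" and b: "\<forall>n. v (b n) \<le> 1"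
    and s: "0 < s" "s < 1"
  shows "0 < hmeasure v s {x. v (x - z) \<le> delta \<and> v x > 1 \<and>
            p_tendsto v (\<lambda>n. int_part v prm C (alpha * x ^ r n) - b n) 0}"
proof -
  obtain m where m: "m \<ge> 1" "v z = inverse rho ^ m" using v_greater_1_eq_power[OF z] by blast
  define gam where "gam = v (of_nat p :: 'a) ^ (K - 1)"
  have gam: "gam > 0" using v_pos[of "of_nat p"] p(1) by (simp add: gam_def prime_gt_0_nat)
  have v_r: "gam \<le> v (of_nat (r n) :: 'a)" for n
    using v_of_nat_ge_power_if_not_dvd[OF p, of K "r n"] K r(2) not_dvd by (simp add: gam_def)
  obtain g where g: "rho ^ g < v alpha * gam"
    using real_arch_pow_inv[of "v alpha * gam" rho] v_pos[OF alpha] gam rho_less_1 by auto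
  obtain A0 where A0: "rho ^ A0 < delta"
    using real_arch_pow_inv[OF delta rho_less_1] by auto
  obtain R :: nat where "s / (1 - s) \<le> real R" using real_arch_simple by blast
  then have R: "s * (real R + 1) \<le> real R" using s by (simp add: field_simps)
  define d where "d n = r (Suc n) - r n" for n
  have "filterlim d at_top sequentially"
    unfolding d_def using r(1) gaps by (rule filterlim_gaps_nat)
  then obtain l where l: "filterlim l at_top sequentially"
    and "\<forall>\<^sub>F n in sequentially. R * (l n + g) + g + l (n - 1) \<le> d (n - 1)"
    by (rule exists_block_lengths)
  then obtain N where N: "\<And>n. n \<ge> N \<Longrightarrow> R * (l n + g) + g + l (n - 1) \<le> d (n - 1)"
    by (auto simp: eventually_sequentially)
  define n0 where "n0 = N + A0 + g + 1"
  interpret digit_construction v prm C alpha z r b m g n0 A0 R l gam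
  proof unfold_locales
    have "A0 + g \<le> r n0 - 1" using strict_mono_imp_increasing[OF r(1), of n0] by (simp add: n0_def)
    also have "\<dots> \<le> m * (r n0 - 1)" using m(1) by simp
    finally show "A0 + g \<le> m * (r n0 - 1)" .
    show "R * (l n + g) + g + l (n - 1) \<le> m * (r n - r (n - 1))" if "n0 < n" for n
    proof -
      have "R * (l n + g) + g + l (n - 1) \<le> d (n - 1)" using that N by (simp add: n0_def)
      also have "\<dots> = r n - r (n - 1)" using that by (simp add: d_def)
      also have "\<dots> \<le> m * (r n - r (n - 1))" using m(1) by simp
      finally show ?thesis .
    qed
  qed (use alpha m gam v_r g r b l in auto)
  show ?thesis using A0 s R by (intro hmeasure_target_pos) auto
qed

end

theorem proposition7p1:
  fixes v :: "'a::field_char_0 \<Rightarrow> real" and prm :: 'a and C :: "'a set"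
    and p :: nat and alpha z :: 'a and K :: nat and delta :: real
    and r :: "nat \<Rightarrow> nat" and b :: "nat \<Rightarrow> 'a"
  assumes "local_field v prm C"
    and "prime p" and "v (of_nat p) < 1"
    and "alpha \<noteq> 0" and "K > 0" and "v z > 1" and "delta > 0"
    and "strict_mono r" and "\<forall>n. r n > 0"
    and "filterlim (\<lambda>n. real (r (Suc n)) - real (r n)) at_top sequentially"
    and "\<forall>n. \<not> p ^ K dvd r n"
    and "\<forall>n. v (b n) \<le> 1"
  shows "hdim v {x. v (x - z) \<le> delta \<and> v x > 1 \<and>
            p_tendsto v (\<lambda>n. int_part v prm C (alpha * x ^ r n) - b n) 0} = 1"
proof -
  interpret local_field_struct v prm C by unfold_locales (rule assms(1))
  show ?thesis
  proof (rule hdim_eq_1I)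
    show "hmeasure v s {x. v (x - z) \<le> delta \<and> v x > 1 \<and>
        p_tendsto v (\<lambda>n. int_part v prm C (alpha * x ^ r n) - b n) 0} = 0" if "1 < s" for s
      using assms(7) that by (intro hmeasure_disc_eq_0[of _ z delta]) auto
    show "0 < hmeasure v s {x. v (x - z) \<le> delta \<and> v x > 1 \<and>
        p_tendsto v (\<lambda>n. int_part v prm C (alpha * x ^ r n) - b n) 0}" if "0 < s" "s < 1" for s
      using assms(2-12) that by (rule hmeasure_target_pos_lt_1)
  qed
qed

end
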